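(* Let $H$ be a complex Hilbert space, $A\in B(H)$ a nonzero positive semidefinite operator, and $T\in B_{A^{1/2}}(H)$. Then $|\lambda|\le\max\{\|T\|_A,\|T^{\diamond}\|_A\}$ for every $\lambda\in\sigma_A(T)$. In particular, $\sigma_A(T)$ is bounded.
   Context: $\|x\|_A=\langle Ax,x\rangle^{1/2}$. For $S\in B(H)$, $\|S\|_A=\sup\{\|Sx\|_A : x\in\overline{R(A)},\ \|x\|_A=1\}$. $B_{A^{1/2}}(H)=\{S\in B(H): R(S^*A^{1/2})\subset R(A^{1/2})\}$. For $S\in B_{A^{1/2}}(H)$, $S^{\diamond}$ is the unique operator in $B(H)$ with $S^*A^{1/2}=A^{1/2}S^{\diamond}$ and $R(S^{\diamond})\subset\overline{R(A^{1/2})}$. $S\in B_{A^{1/2}}(H)$ is $A$-invertible in $B_{A^{1/2}}(H)$ if there is a nonzero $R\in B_{A^{1/2}}(H)$ with $ASR=ARS=A$; $\rho_A(S)=\{\lambda:\lambda I-S$ is $A$-invertible in $B_{A^{1/2}}(H)\}$, $\sigma_A(S)=\mathbb C\setminus\rho_A(S)$. *)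

theory Defs
  imports "HOL-Analysis.Analysis"
begin

text \<open>HOL has no complex inner product spaces, so we introduce them as a type class:
a real normed vector space with a compatible complex scalar multiplication and an
inner product, linear in the first argument and conjugate symmetric, inducing the norm.\<close>

class complex_inner = real_normed_vector +
  fixes scaleC :: "complex \<Rightarrow> 'a \<Rightarrow> 'a"
    and cinner :: "'a \<Rightarrow> 'a \<Rightarrow> complex"
  assumes scaleC_add_right: "scaleC c (x + y) = scaleC c x + scaleC c y"
    and scaleC_add_left: "scaleC (c + d) x = scaleC c x + scaleC d x"
    and scaleC_scaleC: "scaleC c (scaleC d x) = scaleC (c * d) x"
    and scaleC_one: "scaleC 1 x = x"
    and scaleR_scaleC: "scaleR r x = scaleC (complex_of_real r) x"
    and cinner_add_left: "cinner (x + y) z = cinner x z + cinner y z"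
    and cinner_scaleC_left: "cinner (scaleC c x) y = c * cinner x y"
    and cinner_commute: "cinner y x = cnj (cinner x y)"
    and norm_eq_sqrt_cinner: "norm x = sqrt (Re (cinner x x))"

class chilbert_space = complex_inner + complete_space

definition bounded_clinear :: "('a::complex_inner \<Rightarrow> 'b::complex_inner) \<Rightarrow> bool" where
  "bounded_clinear S \<longleftrightarrow> bounded_linear S \<and> (\<forall>c x. S (scaleC c x) = scaleC c (S x))"

definition adj :: "('a::chilbert_space \<Rightarrow> 'a) \<Rightarrow> ('a \<Rightarrow> 'a)" where
  "adj S = (THE S'. \<forall>x y. cinner (S x) y = cinner x (S' y))"

definition positive_op :: "('a::chilbert_space \<Rightarrow> 'a) \<Rightarrow> bool" where
  "positive_op A \<longleftrightarrow> bounded_clinear A \<and>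
     (\<forall>x. Im (cinner (A x) x) = 0 \<and> 0 \<le> Re (cinner (A x) x))"

definition sqrt_op :: "('a::chilbert_space \<Rightarrow> 'a) \<Rightarrow> ('a \<Rightarrow> 'a)" where
  "sqrt_op A = (THE B. positive_op B \<and> B \<circ> B = A)"

definition normA :: "('a::chilbert_space \<Rightarrow> 'a) \<Rightarrow> 'a \<Rightarrow> real" where
  "normA A x = sqrt (Re (cinner (A x) x))"

definition opnormA :: "('a::chilbert_space \<Rightarrow> 'a) \<Rightarrow> ('a \<Rightarrow> 'a) \<Rightarrow> real" where
  "opnormA A S = Sup {normA A (S x) | x. x \<in> closure (range A) \<and> normA A x = 1}"

definition BA :: "('a::chilbert_space \<Rightarrow> 'a) \<Rightarrow> ('a \<Rightarrow> 'a) set" where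
  "BA A = {S. bounded_clinear S \<and> range (adj S \<circ> sqrt_op A) \<subseteq> range (sqrt_op A)}"

definition diamond :: "('a::chilbert_space \<Rightarrow> 'a) \<Rightarrow> ('a \<Rightarrow> 'a) \<Rightarrow> ('a \<Rightarrow> 'a)" where
  "diamond A S = (THE R. bounded_clinear R \<and> adj S \<circ> sqrt_op A = sqrt_op A \<circ> R
                         \<and> range R \<subseteq> closure (range (sqrt_op A)))"

definition A_invertible :: "('a::chilbert_space \<Rightarrow> 'a) \<Rightarrow> ('a \<Rightarrow> 'a) \<Rightarrow> bool" where
  "A_invertible A S \<longleftrightarrow> S \<in> BA A \<and>
     (\<exists>R\<in>BA A. R \<noteq> (\<lambda>_. 0) \<and> A \<circ> S \<circ> R = A \<and> A \<circ> R \<circ> S = A)"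

definition spectrumA :: "('a::chilbert_space \<Rightarrow> 'a) \<Rightarrow> ('a \<Rightarrow> 'a) \<Rightarrow> complex set" where
  "spectrumA A S = - {l. A_invertible A (\<lambda>x. scaleC l x - S x)}"

end

(*
  Let B = A^(1/2), V the closure of the range of B, and T' = T^diamond, so that B T' = T* B
  and, dually, B T = T'* B. Pairing with the dense subspace range B of V converts the
  A-seminorm bounds into bounds in the norm of H: |T' x| <= |T|_A |x|, and the compression
  P_V T of T to V satisfies |P_V T x| <= |T'|_A |x|. Hence for |l| > max(|T|_A, |T'|_A) the
  Neumann series N of P_V T inverts l - P_V T. Since T and P_V T differ only by vectors in
  the kernel of B, N is an A-inverse of l - T; and N lies in B_{A^(1/2)}(H) because its
  adjoint, the Neumann series of (P_V T)*, is intertwined by B with the Neumann series of T'.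
*)
theory Submission
  imports Defs
begin

lemma scaleC_zero_left [simp]: "scaleC 0 (x::'a::complex_inner) = 0"
  by (metis of_real_0 scaleR_zero_left scaleR_scaleC)

lemma scaleC_zero_right [simp]: "scaleC c (0::'a::complex_inner) = 0"
proof -
  have "scaleC c 0 = scaleC c 0 + scaleC c 0" using scaleC_add_right[of c 0 0] by simp
  then show ?thesis by simp
qed

lemma scaleC_minus_left: "scaleC (- c) (x::'a::complex_inner) = - scaleC c x"
proof -
  have "scaleC (-c) x + scaleC c x = 0" using scaleC_add_left[of "-c" c x] by simp
  then show ?thesis by (simp add: eq_neg_iff_add_eq_0)
qed

lemma scaleC_minus_right: "scaleC c (- x::'a::complex_inner) = - scaleC c x"
proof -
  have "scaleC c (-x) + scaleC c x = 0" using scaleC_add_right[of c "-x" x] by simp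
  then show ?thesis by (simp add: eq_neg_iff_add_eq_0)
qed

lemma scaleC_diff_right: "scaleC c (x - y::'a::complex_inner) = scaleC c x - scaleC c y"
  using scaleC_add_right[of c x "-y"] by (simp add: scaleC_minus_right)

lemma scaleC_scaleR_commute: "scaleC c (scaleR r x) = scaleR r (scaleC c (x::'a::complex_inner))"
  by (simp add: scaleR_scaleC scaleC_scaleC mult.commute)

lemma cinner_add_right: "cinner (x::'a::complex_inner) (y + z) = cinner x y + cinner x z"
  by (metis cinner_commute cinner_add_left complex_cnj_add)

lemma cinner_scaleC_right: "cinner (x::'a::complex_inner) (scaleC c y) = cnj c * cinner x y"
  by (metis cinner_commute cinner_scaleC_left complex_cnj_mult complex_cnj_cnj)

lemma cinner_scaleR_left: "cinner (scaleR r x) (y::'a::complex_inner) = of_real r * cinner x y"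
  by (simp add: scaleR_scaleC cinner_scaleC_left)

lemma cinner_scaleR_right: "cinner (x::'a::complex_inner) (scaleR r y) = of_real r * cinner x y"
  by (simp add: scaleR_scaleC cinner_scaleC_right)

lemma cinner_zero_left [simp]: "cinner 0 (y::'a::complex_inner) = 0"
  using cinner_add_left[of 0 0 y] by simp

lemma cinner_zero_right [simp]: "cinner (x::'a::complex_inner) 0 = 0"
  using cinner_add_right[of x 0 0] by simp

lemma cinner_minus_left: "cinner (- x) (y::'a::complex_inner) = - cinner x y"
  using cinner_add_left[of "-x" x y] by (simp add: add_eq_0_iff2)

lemma cinner_minus_right: "cinner (x::'a::complex_inner) (- y) = - cinner x y"
  using cinner_add_right[of x "-y" y] by (simp add: add_eq_0_iff2)

lemma cinner_diff_left: "cinner (x - y) (z::'a::complex_inner) = cinner x z - cinner y z"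
  using cinner_add_left[of x "-y" z] by (simp add: cinner_minus_left)

lemma cinner_diff_right: "cinner (x::'a::complex_inner) (y - z) = cinner x y - cinner x z"
  using cinner_add_right[of x y "-z"] by (simp add: cinner_minus_right)

lemma Im_cinner_self [simp]: "Im (cinner (x::'a::complex_inner) x) = 0"
proof -
  have "Im (cinner x x) = Im (cnj (cinner x x))" using cinner_commute[of x x] by simp
  then show ?thesis by simp
qed

lemma Re_cinner_self: "Re (cinner (x::'a::complex_inner) x) = (norm x)\<^sup>2"
proof -
  have "Re (cinner x x) \<ge> 0"
  proof (rule ccontr)
    assume "\<not> Re (cinner x x) \<ge> 0"
    then have "sqrt (Re (cinner x x)) < 0" by simp
    then show False using norm_eq_sqrt_cinner[of x] norm_ge_zero[of x] by linarith
  qed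
  then show ?thesis using norm_eq_sqrt_cinner[of x] by simp
qed

lemma cinner_self: "cinner (x::'a::complex_inner) x = of_real ((norm x)\<^sup>2)"
  using Im_cinner_self[of x] Re_cinner_self[of x] by (simp add: complex_eq_iff)

lemma cinner_self_eq_0 [simp]: "cinner (x::'a::complex_inner) x = 0 \<longleftrightarrow> x = 0"
  by (simp add: cinner_self)

lemma cinner_eq_left_imp_eq: "(\<And>z. cinner x z = cinner y z) \<Longrightarrow> x = (y::'a::complex_inner)"
  by (metis cinner_diff_left cinner_self_eq_0 right_minus_eq)

lemma cinner_eq_right_imp_eq: "(\<And>z. cinner z x = cinner z y) \<Longrightarrow> x = (y::'a::complex_inner)"
  by (metis cinner_diff_right cinner_self_eq_0 right_minus_eq)

lemma norm_scaleC: "norm (scaleC c (x::'a::complex_inner)) = cmod c * norm x"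
proof -
  have "(norm (scaleC c x))\<^sup>2 = Re (cinner (scaleC c x) (scaleC c x))" by (simp add: Re_cinner_self)
  also have "\<dots> = Re (c * cnj c * cinner x x)"
    by (simp add: cinner_scaleC_left cinner_scaleC_right mult.assoc)
  also have "\<dots> = (cmod c)\<^sup>2 * (norm x)\<^sup>2"
    by (simp add: cinner_self complex_mult_cnj cmod_power2 del: of_real_power)
  finally have "(norm (scaleC c x))\<^sup>2 = (cmod c * norm x)\<^sup>2" by (simp add: power_mult_distrib)
  then show ?thesis by (simp add: power2_eq_iff_nonneg)
qed

lemma norm_diff_sq:
  "(norm (x - y))\<^sup>2 = (norm x)\<^sup>2 - 2 * Re (cinner x y) + (norm (y::'a::complex_inner))\<^sup>2"
proof -
  have "(norm (x - y))\<^sup>2 = Re (cinner (x - y) (x - y))" by (simp add: Re_cinner_self)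
  also have "\<dots> = Re (cinner x x) - Re (cinner x y) - Re (cinner y x) + Re (cinner y y)"
    by (simp add: cinner_diff_left cinner_diff_right)
  also have "Re (cinner y x) = Re (cinner x y)" by (subst cinner_commute) simp
  finally show ?thesis by (simp add: Re_cinner_self)
qed

lemma norm_add_sq:
  "(norm (x + y))\<^sup>2 = (norm x)\<^sup>2 + 2 * Re (cinner x y) + (norm (y::'a::complex_inner))\<^sup>2"
  using norm_diff_sq[of x "-y"] by (simp add: cinner_minus_right)

lemma parallelogram_law:
  "(norm (x + y))\<^sup>2 + (norm (x - y))\<^sup>2 = 2 * (norm x)\<^sup>2 + 2 * (norm (y::'a::complex_inner))\<^sup>2"
  by (simp add: norm_add_sq norm_diff_sq)

lemma cinner_Cauchy_Schwarz: "cmod (cinner (x::'a::complex_inner) y) \<le> norm x * norm y"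
proof (cases "y = 0")
  case True then show ?thesis by simp
next
  case False
  define t where "t = cinner x y / cinner y y"
  have ny: "norm y > 0" using False by simp
  have "0 \<le> Re (cinner (x - scaleC t y) (x - scaleC t y))"
    by (simp add: Re_cinner_self)
  also have "cinner (x - scaleC t y) (x - scaleC t y)
      = cinner x x - cnj t * cinner x y - t * cinner y x + t * cnj t * cinner y y"
    by (simp add: cinner_diff_left cinner_diff_right cinner_scaleC_left cinner_scaleC_right
        algebra_simps)
  also have "t * cnj t * cinner y y = cnj t * cinner x y"
    using False by (simp add: t_def)
  also have "cinner y x = cnj (cinner x y)" by (rule cinner_commute)
  finally have "0 \<le> Re (cinner x x - t * cnj (cinner x y))" by simp
  also have "t * cnj (cinner x y) = of_real ((cmod (cinner x y))\<^sup>2 / (norm y)\<^sup>2)"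
    by (simp add: t_def cinner_self complex_mult_cnj cmod_power2 del: of_real_power)
  finally have "(cmod (cinner x y))\<^sup>2 / (norm y)\<^sup>2 \<le> (norm x)\<^sup>2"
    by (simp add: Re_cinner_self)
  then have "(cmod (cinner x y))\<^sup>2 \<le> (norm x * norm y)\<^sup>2"
    using ny by (simp add: field_simps power_mult_distrib)
  then show ?thesis
    by (meson mult_nonneg_nonneg norm_ge_zero power2_le_imp_le)
qed

lemma bounded_bilinear_cinner: "bounded_bilinear (cinner :: 'a::complex_inner \<Rightarrow> _)"
proof
  fix a a' b b' :: 'a and r :: real
  show "cinner (a + a') b = cinner a b + cinner a' b" by (rule cinner_add_left)
  show "cinner a (b + b') = cinner a b + cinner a b'" by (rule cinner_add_right)
  show "cinner (scaleR r a) b = scaleR r (cinner a b)"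
    by (simp add: cinner_scaleR_left scaleR_conv_of_real)
  show "cinner a (scaleR r b) = scaleR r (cinner a b)"
    by (simp add: cinner_scaleR_right scaleR_conv_of_real)
next
  show "\<exists>K. \<forall>a b. norm (cinner a b) \<le> norm a * norm b * K"
    by (rule exI[of _ 1]) (simp add: cinner_Cauchy_Schwarz)
qed

lemmas bounded_linear_cinner_left = bounded_bilinear.bounded_linear_left[OF bounded_bilinear_cinner]
lemmas bounded_linear_cinner_right = bounded_bilinear.bounded_linear_right[OF bounded_bilinear_cinner]

lemma bounded_linear_scaleC_right: "bounded_linear (scaleC c :: 'a::complex_inner \<Rightarrow> 'a)"
proof
  fix x y :: 'a and r :: real
  show "scaleC c (x + y) = scaleC c x + scaleC c y" by (rule scaleC_add_right)
  show "scaleC c (scaleR r x) = scaleR r (scaleC c x)" by (rule scaleC_scaleR_commute)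
  show "\<exists>K. \<forall>x. norm (scaleC c x) \<le> norm x * K"
    by (rule exI[of _ "cmod c"]) (simp add: norm_scaleC mult.commute)
qed

instance chilbert_space \<subseteq> banach ..

lemma bounded_clinear_imp_bounded_linear: "bounded_clinear S \<Longrightarrow> bounded_linear S"
  by (simp add: bounded_clinear_def)

lemma clinear_scaleC: "bounded_clinear S \<Longrightarrow> S (scaleC c x) = scaleC c (S x)"
  by (simp add: bounded_clinear_def)

lemma clinear_add: "bounded_clinear S \<Longrightarrow> S (x + y) = S x + S y"
  using bounded_clinear_imp_bounded_linear linear_add bounded_linear.linear by blast

lemma clinear_diff: "bounded_clinear S \<Longrightarrow> S (x - y) = S x - S y"
  using bounded_clinear_imp_bounded_linear linear_diff bounded_linear.linear by blast

lemma clinear_zero: "bounded_clinear S \<Longrightarrow> S 0 = 0"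
  using bounded_clinear_imp_bounded_linear linear_0 bounded_linear.linear by blast

lemma clinear_sum: "bounded_clinear S \<Longrightarrow> S (sum f A) = (\<Sum>i\<in>A. S (f i))"
  using bounded_clinear_imp_bounded_linear linear_sum bounded_linear.linear by blast

lemma clinear_scaleR: "bounded_clinear S \<Longrightarrow> S (scaleR r x) = scaleR r (S x)"
  using bounded_clinear_imp_bounded_linear linear_scale bounded_linear.linear by blast

lemma clinear_suminf: "bounded_clinear S \<Longrightarrow> summable f \<Longrightarrow> S (suminf f) = (\<Sum>n. S (f n))"
  using bounded_clinear_imp_bounded_linear bounded_linear.suminf by metis

lemma bounded_clinear_pos_bounded: "bounded_clinear S \<Longrightarrow> \<exists>K>0. \<forall>x. norm (S x) \<le> norm x * K"
  using bounded_clinear_imp_bounded_linear bounded_linear.pos_bounded by blast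

lemma bounded_clinear_tendsto:
  "bounded_clinear S \<Longrightarrow> (f \<longlongrightarrow> l) F \<Longrightarrow> ((\<lambda>n. S (f n)) \<longlongrightarrow> S l) F"
  using bounded_clinear_imp_bounded_linear bounded_linear.tendsto by blast

lemma bounded_clinearI:
  assumes "\<And>x y. S (x + y) = S x + S y" "\<And>c x. S (scaleC c x) = scaleC c (S x)"
    and "\<And>x. norm (S x) \<le> norm x * K"
  shows "bounded_clinear S"
  unfolding bounded_clinear_def
proof (intro conjI allI)
  show "bounded_linear S"
  proof
    fix x y r
    show "S (x + y) = S x + S y" by (rule assms(1))
    show "S (scaleR r x) = scaleR r (S x)" by (simp add: scaleR_scaleC assms(2))
    show "\<exists>K. \<forall>x. norm (S x) \<le> norm x * K" using assms(3) by blast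
  qed
qed (rule assms(2))

lemma bounded_clinear_ident: "bounded_clinear (\<lambda>x. x)"
  by (rule bounded_clinearI[where K=1]) auto

lemma bounded_clinear_compose:
  "bounded_clinear S \<Longrightarrow> bounded_clinear R \<Longrightarrow> bounded_clinear (\<lambda>x. S (R x))"
  unfolding bounded_clinear_def by (auto intro: bounded_linear_compose)

lemma bounded_clinear_diff:
  "bounded_clinear S \<Longrightarrow> bounded_clinear R \<Longrightarrow> bounded_clinear (\<lambda>x. S x - R x)"
  unfolding bounded_clinear_def using bounded_linear_sub by (auto simp: scaleC_diff_right)

lemma bounded_clinear_scaleC:
  "bounded_clinear S \<Longrightarrow> bounded_clinear (\<lambda>x. scaleC c (S x))"
  unfolding bounded_clinear_def
  using bounded_linear_compose[OF bounded_linear_scaleC_right]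
  by (auto simp: scaleC_scaleC mult.commute)

lemma bounded_clinear_funpow:
  fixes S :: "'a::complex_inner \<Rightarrow> 'a"
  assumes "bounded_clinear S"
  shows "bounded_clinear (S ^^ n)"
proof (induct n)
  case 0
  show ?case by (simp add: id_def bounded_clinear_ident)
next
  case (Suc n)
  then show ?case using bounded_clinear_compose[OF assms Suc] by (simp add: o_def)
qed

lemma funpow_intertwining:
  fixes Q :: "'a \<Rightarrow> 'b" and S :: "'a \<Rightarrow> 'a" and S' :: "'b \<Rightarrow> 'b"
  assumes "\<And>x. Q (S x) = S' (Q x)"
  shows "Q ((S ^^ n) x) = (S' ^^ n) (Q x)"
  by (induct n) (simp_all add: assms)

definition csubspace :: "'a::complex_inner set \<Rightarrow> bool" where
  "csubspace M \<longleftrightarrow> 0 \<in> M \<and> (\<forall>x\<in>M. \<forall>y\<in>M. x + y \<in> M) \<and> (\<forall>c. \<forall>x\<in>M. scaleC c x \<in> M)"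

lemma csubspace_0: "csubspace M \<Longrightarrow> 0 \<in> M"
  by (simp add: csubspace_def)

lemma csubspace_add: "csubspace M \<Longrightarrow> x \<in> M \<Longrightarrow> y \<in> M \<Longrightarrow> x + y \<in> M"
  by (simp add: csubspace_def)

lemma csubspace_scaleC: "csubspace M \<Longrightarrow> x \<in> M \<Longrightarrow> scaleC c x \<in> M"
  by (simp add: csubspace_def)

lemma csubspace_diff: "csubspace M \<Longrightarrow> x \<in> M \<Longrightarrow> y \<in> M \<Longrightarrow> x - y \<in> M"
  using csubspace_add[of M x "-y"] csubspace_scaleC[of M y "-1"]
  by (simp add: scaleC_minus_left scaleC_one)

lemma csubspace_scaleR: "csubspace M \<Longrightarrow> x \<in> M \<Longrightarrow> scaleR r x \<in> M"
  by (simp add: scaleR_scaleC csubspace_scaleC)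

lemma csubspace_range: "bounded_clinear S \<Longrightarrow> csubspace (range S)"
  unfolding csubspace_def
proof (intro conjI ballI allI)
  assume S: "bounded_clinear S"
  show "0 \<in> range S" using clinear_zero[OF S] by (metis rangeI)
  fix x y assume "x \<in> range S" "y \<in> range S"
  then obtain a b where "x = S a" "y = S b" by auto
  then show "x + y \<in> range S" using clinear_add[OF S, of a b] by (metis rangeI)
next
  fix c x assume S: "bounded_clinear S" and "x \<in> range S"
  then obtain a where "x = S a" by auto
  then show "scaleC c x \<in> range S" using clinear_scaleC[OF S, of c a] by (metis rangeI)
qed

lemma csubspace_closure:
  assumes M: "csubspace M"
  shows "csubspace (closure M)"
  unfolding csubspace_def
proof (intro conjI ballI allI)
  show "0 \<in> closure M" using csubspace_0[OF M] closure_subset by blast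
  fix x y assume "x \<in> closure M" "y \<in> closure M"
  then obtain f g where f: "\<forall>n. f n \<in> M" "f \<longlonglongrightarrow> x" and g: "\<forall>n. g n \<in> M" "g \<longlonglongrightarrow> y"
    by (meson closure_sequential)
  have "(\<lambda>n. f n + g n) \<longlonglongrightarrow> x + y" using f g by (intro tendsto_add) auto
  moreover have "\<forall>n. f n + g n \<in> M" using f g csubspace_add[OF M] by blast
  ultimately show "x + y \<in> closure M" by (meson closure_sequential)
next
  fix c x assume "x \<in> closure M"
  then obtain f where f: "\<forall>n. f n \<in> M" "f \<longlonglongrightarrow> x"
    by (meson closure_sequential)
  have "(\<lambda>n. scaleC c (f n)) \<longlonglongrightarrow> scaleC c x"
    using f bounded_linear.tendsto[OF bounded_linear_scaleC_right] by blast
  moreover have "\<forall>n. scaleC c (f n) \<in> M" using f csubspace_scaleC[OF M] by blast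
  ultimately show "scaleC c x \<in> closure M" by (meson closure_sequential)
qed

section \<open>Orthogonal projections, Riesz representation and adjoints\<close>

lemma orthogonal_if_minimal_norm:
  fixes z :: "'a::complex_inner"
  assumes "\<And>t. norm z \<le> norm (z - scaleC t m)"
  shows "cinner z m = 0"
proof (cases "m = 0")
  case True then show ?thesis by simp
next
  case False
  define t where "t = cinner z m / cinner m m"
  have nm: "norm m > 0" using False by simp
  have "(norm z)\<^sup>2 \<le> (norm (z - scaleC t m))\<^sup>2"
    using assms[of t] by (simp add: power_mono)
  also have "\<dots> = (norm z)\<^sup>2 - 2 * Re (cinner z (scaleC t m)) + (cmod t * norm m)\<^sup>2"
    by (simp add: norm_diff_sq norm_scaleC)
  also have "Re (cinner z (scaleC t m)) = (cmod (cinner z m))\<^sup>2 / (norm m)\<^sup>2"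
    by (simp add: cinner_scaleC_right t_def cinner_self complex_mult_cnj cmod_power2 mult.commute
        del: of_real_power)
  also have "(cmod t * norm m)\<^sup>2 = (cmod (cinner z m))\<^sup>2 / (norm m)\<^sup>2"
    using nm by (simp add: t_def cinner_self norm_divide power_mult_distrib power_divide
        del: of_real_power) (simp add: power2_eq_square power4_eq_xxxx field_simps)
  finally have "(cmod (cinner z m))\<^sup>2 / (norm m)\<^sup>2 \<le> 0" by simp
  then have "(cmod (cinner z m))\<^sup>2 \<le> 0" using nm by (simp add: divide_le_0_iff)
  then show ?thesis by simp
qed

lemma almost_closest_points_close:
  fixes x :: "'a::complex_inner"
  assumes M: "csubspace M" and d: "\<And>m. m \<in> M \<Longrightarrow> d \<le> (norm (x - m))\<^sup>2"
    and a: "a \<in> M" "(norm (x - a))\<^sup>2 \<le> d + e" and b: "b \<in> M" "(norm (x - b))\<^sup>2 \<le> d + e'"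
  shows "(norm (a - b))\<^sup>2 \<le> 2 * e + 2 * e'"
proof -
  have "scaleR (1/2) (a + b) \<in> M" using a b M by (simp add: csubspace_add csubspace_scaleR)
  moreover have "(x - a) + (x - b) = scaleR 2 (x - scaleR (1/2) (a + b))"
    by (simp add: algebra_simps scaleR_2)
  ultimately have mid: "4 * d \<le> (norm ((x - a) + (x - b)))\<^sup>2"
    using d by (simp add: power_mult_distrib)
  have "(norm (a - b))\<^sup>2 = (norm ((x - a) - (x - b)))\<^sup>2" by (simp add: norm_minus_commute)
  then show ?thesis using parallelogram_law[of "x - a" "x - b"] a b mid by linarith
qed

lemma almost_closest_sequence_Cauchy:
  fixes x :: "'a::complex_inner"
  assumes M: "csubspace M" and d: "\<And>m. m \<in> M \<Longrightarrow> d \<le> (norm (x - m))\<^sup>2"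
    and f: "\<And>n. f n \<in> M" "\<And>n. (norm (x - f n))\<^sup>2 \<le> d + 1 / Suc n"
  shows "Cauchy f"
proof (rule metric_CauchyI)
  fix e :: real assume e: "e > 0"
  obtain N :: nat where "4 / e\<^sup>2 < real N" using reals_Archimedean2 by blast
  then have N: "4 / e\<^sup>2 < real (Suc N)" by simp
  have "\<forall>m\<ge>N. \<forall>n\<ge>N. dist (f m) (f n) < e"
  proof (intro allI impI)
    fix m n assume "m \<ge> N" "n \<ge> N"
    then have "1 / real (Suc m) \<le> 1 / Suc N" "1 / real (Suc n) \<le> 1 / Suc N"
      by (simp_all add: frac_le)
    moreover have "(norm (f m - f n))\<^sup>2 \<le> 2 * (1 / Suc m) + 2 * (1 / Suc n)"
      by (rule almost_closest_points_close[OF M d f(1) f(2) f(1) f(2)])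
    moreover have "4 * (1 / real (Suc N)) < e\<^sup>2"
      using N e by (simp add: divide_less_eq mult.commute del: of_nat_Suc)
    ultimately have "(norm (f m - f n))\<^sup>2 < e\<^sup>2" by linarith
    then show "dist (f m) (f n) < e" using e by (simp add: dist_norm power_less_imp_less_base)
  qed
  then show "\<exists>N. \<forall>m\<ge>N. \<forall>n\<ge>N. dist (f m) (f n) < e" by blast
qed

lemma projection_exists:
  fixes M :: "'a::chilbert_space set"
  assumes M: "csubspace M" "closed M"
  shows "\<exists>p\<in>M. \<forall>m\<in>M. cinner (x - p) m = 0"
proof -
  define D where "D = (\<lambda>m. (norm (x - m))\<^sup>2) ` M"
  define d where "d = Inf D"
  have D: "D \<noteq> {}" "bdd_below D"
    using csubspace_0[OF M(1)] by (auto simp: D_def intro!: bdd_belowI[of _ 0])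
  have d_le: "d \<le> (norm (x - m))\<^sup>2" if "m \<in> M" for m
    unfolding d_def using D that by (auto simp: D_def intro!: cInf_lower)
  have "\<exists>m\<in>M. (norm (x - m))\<^sup>2 < d + 1 / Suc n" for n
  proof -
    have "Inf D < d + 1 / Suc n" by (simp add: d_def)
    then obtain r where "r \<in> D" "r < d + 1 / Suc n" using cInf_lessD[OF D(1)] by blast
    then show ?thesis by (auto simp: D_def)
  qed
  then obtain f where f: "\<And>n. f n \<in> M" "\<And>n. (norm (x - f n))\<^sup>2 < d + 1 / Suc n" by metis
  have "Cauchy f"
    by (rule almost_closest_sequence_Cauchy[OF M(1) d_le f(1) less_imp_le[OF f(2)]])
  then obtain p where p: "f \<longlonglongrightarrow> p" using complete_UNIV convergent_eq_Cauchy by blast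
  have pM: "p \<in> M" using M(2) f(1) p closed_sequential_limits by blast
  have "(\<lambda>n. (norm (x - f n))\<^sup>2) \<longlonglongrightarrow> (norm (x - p))\<^sup>2" using p by (intro tendsto_intros)
  moreover have "(\<lambda>n. d + 1 / Suc n) \<longlonglongrightarrow> d + 0"
    by (intro tendsto_intros LIMSEQ_Suc[OF lim_inverse_n'])
  ultimately have "(norm (x - p))\<^sup>2 \<le> d"
    using f(2) by (intro LIMSEQ_le[of "\<lambda>n. (norm (x - f n))\<^sup>2" _ "\<lambda>n. d + 1 / Suc n"])
      (auto intro: less_imp_le)
  then have closest: "norm (x - p) \<le> norm (x - m)" if "m \<in> M" for m
    using d_le[OF that] by (meson order.trans power2_le_imp_le norm_ge_zero)
  have "cinner (x - p) m = 0" if m: "m \<in> M" for m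
  proof (rule orthogonal_if_minimal_norm)
    fix t
    have "p + scaleC t m \<in> M" using m pM M(1) by (simp add: csubspace_add csubspace_scaleC)
    then have "norm (x - p) \<le> norm (x - (p + scaleC t m))" by (rule closest)
    then show "norm (x - p) \<le> norm (x - p - scaleC t m)" by (simp add: algebra_simps)
  qed
  with pM show ?thesis by blast
qed

definition proj :: "'a::chilbert_space set \<Rightarrow> 'a \<Rightarrow> 'a" where
  "proj M x = (SOME p. p \<in> M \<and> (\<forall>m\<in>M. cinner (x - p) m = 0))"

locale closed_csubspace =
  fixes M :: "'a::chilbert_space set"
  assumes subspace: "csubspace M" and closed: "closed M"
begin

lemma proj_spec: "proj M x \<in> M \<and> (\<forall>m\<in>M. cinner (x - proj M x) m = 0)"
proof -
  have "\<exists>p. p \<in> M \<and> (\<forall>m\<in>M. cinner (x - p) m = 0)"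
    using projection_exists[OF subspace closed, of x] by blast
  then show ?thesis unfolding proj_def by (rule someI_ex)
qed

lemma proj_in: "proj M x \<in> M"
  using proj_spec by blast

lemma proj_orthogonal: "m \<in> M \<Longrightarrow> cinner (x - proj M x) m = 0"
  using proj_spec by blast

lemma proj_orthogonal': "m \<in> M \<Longrightarrow> cinner m (x - proj M x) = 0"
  using proj_orthogonal[of m x] cinner_commute[of m "x - proj M x"] by simp

lemma proj_unique:
  assumes "p \<in> M" "\<And>m. m \<in> M \<Longrightarrow> cinner (x - p) m = 0"
  shows "proj M x = p"
proof -
  have "cinner (p - proj M x) m = 0" if "m \<in> M" for m
  proof -
    have "p - proj M x = (x - proj M x) - (x - p)" by simp
    then show ?thesis
      using proj_orthogonal[OF that, of x] assms(2)[OF that] by (simp add: cinner_diff_left)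
  qed
  moreover have "p - proj M x \<in> M" using assms(1) proj_in subspace by (simp add: csubspace_diff)
  ultimately have "cinner (p - proj M x) (p - proj M x) = 0" by blast
  then show ?thesis by simp
qed

lemma proj_id: "x \<in> M \<Longrightarrow> proj M x = x"
  by (rule proj_unique) auto

lemma proj_eq_0: "(\<And>m. m \<in> M \<Longrightarrow> cinner x m = 0) \<Longrightarrow> proj M x = 0"
  by (rule proj_unique) (auto simp: csubspace_0[OF subspace])

lemma norm_proj_le: "norm (proj M x) \<le> norm x"
proof -
  have "(norm x)\<^sup>2 = (norm (proj M x + (x - proj M x)))\<^sup>2" by simp
  also have "\<dots> = (norm (proj M x))\<^sup>2 + (norm (x - proj M x))\<^sup>2"
    by (simp only: norm_add_sq proj_orthogonal'[OF proj_in]) simp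
  finally have "(norm (proj M x))\<^sup>2 \<le> (norm x)\<^sup>2" by simp
  then show ?thesis by (rule power2_le_imp_le) simp
qed

lemma bounded_clinear_proj: "bounded_clinear (proj M)"
proof (rule bounded_clinearI[where K=1])
  fix x y
  show "proj M (x + y) = proj M x + proj M y"
  proof (rule proj_unique)
    show "proj M x + proj M y \<in> M" by (simp add: csubspace_add[OF subspace] proj_in)
    fix m assume m: "m \<in> M"
    have eq: "x + y - (proj M x + proj M y) = (x - proj M x) + (y - proj M y)" by simp
    show "cinner (x + y - (proj M x + proj M y)) m = 0"
      unfolding eq cinner_add_left using proj_orthogonal[OF m, of x] proj_orthogonal[OF m, of y]
      by simp
  qed
next
  fix c x
  show "proj M (scaleC c x) = scaleC c (proj M x)"
  proof (rule proj_unique)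
    show "scaleC c (proj M x) \<in> M" by (simp add: csubspace_scaleC[OF subspace] proj_in)
    fix m assume m: "m \<in> M"
    have "scaleC c x - scaleC c (proj M x) = scaleC c (x - proj M x)" by (simp add: scaleC_diff_right)
    then show "cinner (scaleC c x - scaleC c (proj M x)) m = 0"
      using proj_orthogonal[OF m, of x] by (simp add: cinner_scaleC_left)
  qed
qed (simp add: norm_proj_le)

lemma proj_selfadjoint: "cinner (proj M x) y = cinner x (proj M y)"
proof -
  have "cinner (proj M x) y = cinner (proj M x) (proj M y) + cinner (proj M x) (y - proj M y)"
    by (simp add: cinner_diff_right)
  moreover have "cinner x (proj M y) = cinner (proj M x) (proj M y) + cinner (x - proj M x) (proj M y)"
    by (simp add: cinner_diff_left)
  ultimately show ?thesis
    by (simp add: proj_orthogonal[OF proj_in] proj_orthogonal'[OF proj_in])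
qed

end

lemma closed_csubspace_closure_range:
  "bounded_clinear S \<Longrightarrow> closed_csubspace (closure (range S))"
  by unfold_locales (auto intro: csubspace_closure csubspace_range)

lemma closed_csubspace_kernel:
  fixes f :: "'a::chilbert_space \<Rightarrow> complex"
  assumes add: "\<And>x y. f (x + y) = f x + f y" and hom: "\<And>c x. f (scaleC c x) = c * f x"
    and bound: "\<And>x. cmod (f x) \<le> K * norm x"
  shows "closed_csubspace {x. f x = 0}"
proof
  have f0: "f 0 = 0" using add[of 0 0] by simp
  then show "csubspace {x. f x = 0}" unfolding csubspace_def using add hom by auto
  have "bounded_linear f"
  proof
    fix x y :: 'a and r :: real
    show "f (x + y) = f x + f y" by (rule add)
    show "f (scaleR r x) = scaleR r (f x)" by (simp add: scaleR_scaleC hom scaleR_conv_of_real)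
    show "\<exists>K. \<forall>x. norm (f x) \<le> norm x * K" using bound by (intro exI[of _ K]) (simp add: mult.commute)
  qed
  then have "continuous_on UNIV f" by (rule linear_continuous_on)
  then show "closed {x. f x = 0}"
    using continuous_closed_preimage_constant[OF _ closed_UNIV, of f 0] by simp
qed

lemma Riesz_representation:
  fixes f :: "'a::chilbert_space \<Rightarrow> complex"
  assumes add: "\<And>x y. f (x + y) = f x + f y" and hom: "\<And>c x. f (scaleC c x) = c * f x"
    and bound: "\<And>x. cmod (f x) \<le> K * norm x"
  shows "\<exists>z. \<forall>x. f x = cinner x z"
proof (cases "\<forall>x. f x = 0")
  case True then show ?thesis by (intro exI[of _ 0]) simp
next
  case False
  then obtain x0 where x0: "f x0 \<noteq> 0" by blast
  interpret closed_csubspace "{x. f x = 0}" by (rule closed_csubspace_kernel[OF add hom bound])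
  have fdiff: "f (x - y) = f x - f y" for x y using add[of "x - y" y] by simp
  define u where "u = x0 - proj {x. f x = 0} x0"
  have fu: "f u = f x0" using proj_in[of x0] by (simp add: u_def fdiff)
  have u_orth: "cinner m u = 0" if "f m = 0" for m
    unfolding u_def by (rule proj_orthogonal') (use that in simp)
  have uu: "cinner u u \<noteq> 0" using fu x0 fdiff[of 0 0] by auto
  have "f x = cinner x (scaleC (cnj (f u / cinner u u)) u)" for x
  proof -
    have "f (x - scaleC (f x / f u) u) = 0" using x0 fu by (simp add: fdiff hom)
    then have "cinner (x - scaleC (f x / f u) u) u = 0" by (rule u_orth)
    then have "cinner x u = (f x / f u) * cinner u u"
      by (simp add: cinner_diff_left cinner_scaleC_left)
    then show ?thesis using uu x0 fu by (simp add: cinner_scaleC_right field_simps)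
  qed
  then show ?thesis by blast
qed

lemma adjoint_exists:
  fixes S :: "'a::chilbert_space \<Rightarrow> 'a"
  assumes S: "bounded_clinear S"
  shows "\<exists>S'. \<forall>x y. cinner (S x) y = cinner x (S' y)"
proof -
  obtain K where K: "\<forall>x. norm (S x) \<le> norm x * K" using bounded_clinear_pos_bounded[OF S] by blast
  have "\<exists>z. \<forall>x. cinner (S x) y = cinner x z" for y
  proof (rule Riesz_representation[where K="K * norm y"])
    fix x x' c
    show "cinner (S (x + x')) y = cinner (S x) y + cinner (S x') y"
      by (simp add: clinear_add[OF S] cinner_add_left)
    show "cinner (S (scaleC c x)) y = c * cinner (S x) y"
      by (simp add: clinear_scaleC[OF S] cinner_scaleC_left)
    have "cmod (cinner (S x) y) \<le> norm (S x) * norm y" by (rule cinner_Cauchy_Schwarz)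
    also have "\<dots> \<le> norm x * K * norm y" using K by (simp add: mult_right_mono)
    finally show "cmod (cinner (S x) y) \<le> K * norm y * norm x" by (simp add: ac_simps)
  qed
  then show ?thesis by metis
qed

lemma adj_unique:
  fixes S :: "'a::chilbert_space \<Rightarrow> 'a"
  assumes "\<And>x y. cinner (S x) y = cinner x (S' y)"
  shows "adj S = S'"
  unfolding adj_def
proof (rule the_equality)
  show "\<forall>x y. cinner (S x) y = cinner x (S' y)" using assms by blast
  fix S'' assume "\<forall>x y. cinner (S x) y = cinner x (S'' y)"
  then show "S'' = S'" using assms by (intro ext cinner_eq_right_imp_eq) metis
qed

lemma cinner_adj_right:
  fixes S :: "'a::chilbert_space \<Rightarrow> 'a"
  assumes "bounded_clinear S"
  shows "cinner (S x) y = cinner x (adj S y)"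
proof -
  obtain S' where "\<forall>x y. cinner (S x) y = cinner x (S' y)" using adjoint_exists[OF assms] by blast
  moreover from this have "adj S = S'" by (intro adj_unique) blast
  ultimately show ?thesis by simp
qed

lemma cinner_adj_left:
  fixes S :: "'a::chilbert_space \<Rightarrow> 'a"
  assumes "bounded_clinear S"
  shows "cinner (adj S y) x = cinner y (S x)"
  using cinner_adj_right[OF assms, of x y] by (metis cinner_commute)

lemma norm_adjoint_le:
  fixes S S' :: "'a::complex_inner \<Rightarrow> 'a"
  assumes adjoint: "\<And>x y. cinner (S x) y = cinner x (S' y)"
    and bound: "\<And>x. norm (S x) \<le> c * norm x" and "c \<ge> 0"
  shows "norm (S' y) \<le> c * norm y"
proof (cases "S' y = 0")
  case True
  then show ?thesis using \<open>c \<ge> 0\<close> by simp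
next
  case False
  have "(norm (S' y))\<^sup>2 = Re (cinner (S' y) (S' y))" by (simp add: Re_cinner_self)
  also have "cinner (S' y) (S' y) = cnj (cinner (S (S' y)) y)"
    by (metis adjoint cinner_commute)
  also have "Re (cnj (cinner (S (S' y)) y)) \<le> cmod (cinner (S (S' y)) y)"
    by (simp add: complex_Re_le_cmod)
  also have "\<dots> \<le> norm (S (S' y)) * norm y" by (rule cinner_Cauchy_Schwarz)
  also have "\<dots> \<le> c * norm (S' y) * norm y" using bound by (simp add: mult_right_mono)
  finally have "norm (S' y) * norm (S' y) \<le> norm (S' y) * (c * norm y)"
    by (simp add: power2_eq_square ac_simps)
  then show ?thesis using False by simp
qed

lemma bounded_clinear_adj:
  fixes S :: "'a::chilbert_space \<Rightarrow> 'a"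
  assumes S: "bounded_clinear S"
  shows "bounded_clinear (adj S)"
proof -
  obtain K where K: "K > 0" "\<forall>x. norm (S x) \<le> norm x * K"
    using bounded_clinear_pos_bounded[OF S] by blast
  show ?thesis
  proof (rule bounded_clinearI[where K=K])
    fix y y' c
    show "adj S (y + y') = adj S y + adj S y'"
      by (rule cinner_eq_right_imp_eq) (simp add: cinner_adj_right[OF S, symmetric] cinner_add_right)
    show "adj S (scaleC c y) = scaleC c (adj S y)"
      by (rule cinner_eq_right_imp_eq) (simp add: cinner_adj_right[OF S, symmetric] cinner_scaleC_right)
    show "norm (adj S y) \<le> norm y * K"
      using norm_adjoint_le[of S "adj S" K y] cinner_adj_right[OF S] K by (simp add: mult.commute)
  qed
qed

lemma selfadjoint_if_real_form:
  fixes B :: "'a::complex_inner \<Rightarrow> 'a"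
  assumes B: "bounded_clinear B" and real: "\<And>x. Im (cinner (B x) x) = 0"
  shows "cinner (B x) y = cinner x (B y)"
proof -
  define f where "f x y = cinner (B x) y - cinner x (B y)" for x y
  have diag: "f z z = 0" for z
  proof -
    have "cinner z (B z) = cnj (cinner (B z) z)" by (rule cinner_commute)
    also have "\<dots> = cinner (B z) z" using real[of z] by (simp add: complex_eq_iff)
    finally show ?thesis by (simp add: f_def)
  qed
  have f_add: "f (a + b) w = f a w + f b w" "f w (a + b) = f w a + f w b" for a b w
    by (simp_all add: f_def clinear_add[OF B] cinner_add_left cinner_add_right)
  have f_scaleC: "f (scaleC c a) w = c * f a w" "f w (scaleC c a) = cnj c * f w a" for a c w
    by (simp_all add: f_def clinear_scaleC[OF B] cinner_scaleC_left cinner_scaleC_right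
        algebra_simps)
  \<comment> \<open>polarization: the sesquilinear form \<open>f\<close> vanishes on the diagonal, hence everywhere\<close>
  have "f (x + y) (x + y) = f x x + f x y + f y x + f y y" by (simp add: f_add)
  then have s1: "f y x = - f x y" using diag[of "x + y"] diag[of x] diag[of y]
    by (simp add: eq_neg_iff_add_eq_0 add.commute)
  have "f (x + scaleC \<i> y) (x + scaleC \<i> y)
      = f x x + f x (scaleC \<i> y) + f (scaleC \<i> y) x + f (scaleC \<i> y) (scaleC \<i> y)"
    by (simp add: f_add)
  then have "f x (scaleC \<i> y) + f (scaleC \<i> y) x = 0"
    using diag[of "x + scaleC \<i> y"] diag[of x] diag[of "scaleC \<i> y"] by simp
  then have "- \<i> * f x y + \<i> * f y x = 0" by (simp add: f_scaleC)
  then have "- (2 * \<i>) * f x y = 0" using s1 by (simp add: algebra_simps)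
  then show ?thesis by (simp add: f_def)
qed

lemma positive_op_bounded_clinear: "positive_op B \<Longrightarrow> bounded_clinear B"
  by (simp add: positive_op_def)

lemma positive_op_Re_nonneg: "positive_op B \<Longrightarrow> 0 \<le> Re (cinner (B x) x)"
  by (simp add: positive_op_def)

lemma positive_op_Im_eq_0: "positive_op B \<Longrightarrow> Im (cinner (B x) x) = 0"
  by (simp add: positive_op_def)

lemma positive_op_selfadjoint:
  fixes B :: "'a::chilbert_space \<Rightarrow> 'a"
  assumes "positive_op B"
  shows "cinner (B x) y = cinner x (B y)"
  using assms unfolding positive_op_def by (intro selfadjoint_if_real_form) auto

lemma le_mult_if_quadratic_nonneg:
  fixes a q c :: real
  assumes h: "\<And>r. 0 \<le> a - 2 * r * q + r\<^sup>2 * q * c" and "c \<ge> 0" "q \<ge> 0"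
  shows "q \<le> a * c"
proof (cases "c = 0")
  case True
  show ?thesis
  proof (rule ccontr)
    assume "\<not> q \<le> a * c"
    then have q: "q > 0" using True \<open>q \<ge> 0\<close> by simp
    have "0 \<le> a - 2 * ((a + 1) / (2 * q)) * q" using h[of "(a + 1) / (2 * q)"] True by simp
    then show False using q by (simp add: field_simps)
  qed
next
  case False
  then have c: "c > 0" using \<open>c \<ge> 0\<close> by simp
  have "0 \<le> a - 2 * (1 / c) * q + (1 / c)\<^sup>2 * q * c" by (rule h)
  then have "0 \<le> a - q / c" using c by (simp add: power2_eq_square field_simps)
  then show ?thesis using c by (simp add: field_simps)
qed

lemma positive_op_Cauchy_Schwarz:
  fixes B :: "'a::chilbert_space \<Rightarrow> 'a"
  assumes B: "positive_op B"
  shows "(cmod (cinner (B x) y))\<^sup>2 \<le> Re (cinner (B x) x) * Re (cinner (B y) y)"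
proof -
  define b where "b = cinner (B x) y"
  define q where "q = (cmod b)\<^sup>2"
  have Bb: "bounded_clinear B" using B by (rule positive_op_bounded_clinear)
  have byx: "cinner (B y) x = cnj b"
    unfolding b_def using positive_op_selfadjoint[OF B, of y x] cinner_commute[of y "B x"] by simp
  have bb: "cnj b * b = of_real q" by (simp add: q_def complex_mult_cnj cmod_power2 mult.commute)
  have "0 \<le> Re (cinner (B x) x) - 2 * r * q + r\<^sup>2 * q * Re (cinner (B y) y)" for r
  proof -
    define t where "t = of_real r * b"
    have "cinner (B (x - scaleC t y)) (x - scaleC t y)
       = cinner (B x) x - cnj t * b - t * cnj b + t * cnj t * cinner (B y) y"
      by (simp add: clinear_diff[OF Bb] clinear_scaleC[OF Bb] cinner_diff_left cinner_diff_right
          cinner_scaleC_left cinner_scaleC_right byx b_def algebra_simps)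
    also have "cnj t * b = of_real (r * q)" by (simp add: t_def bb[symmetric] mult.commute)
    also have "t * cnj b = of_real (r * q)" by (simp add: t_def bb[symmetric] mult.commute)
    also have "t * cnj t = of_real (r\<^sup>2 * q)"
      by (simp add: t_def power2_eq_square bb[symmetric] mult.commute mult.left_commute)
    finally have "Re (cinner (B (x - scaleC t y)) (x - scaleC t y))
        = Re (cinner (B x) x) - 2 * r * q + r\<^sup>2 * q * Re (cinner (B y) y)"
      by simp
    then show ?thesis using positive_op_Re_nonneg[OF B, of "x - scaleC t y"] by simp
  qed
  then have "q \<le> Re (cinner (B x) x) * Re (cinner (B y) y)"
    by (rule le_mult_if_quadratic_nonneg) (auto simp: q_def positive_op_Re_nonneg[OF B])
  then show ?thesis by (simp add: q_def b_def)
qed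

lemma positive_op_eq_0_if_form_eq_0:
  fixes B :: "'a::chilbert_space \<Rightarrow> 'a"
  assumes B: "positive_op B" and "Re (cinner (B y) y) = 0"
  shows "B y = 0"
proof -
  have "(cmod (cinner (B (B y)) y))\<^sup>2 \<le> 0"
    using positive_op_Cauchy_Schwarz[OF B, of "B y" y] assms(2) by simp
  then have "cinner (B y) (B y) = 0" using positive_op_selfadjoint[OF B, of "B y" y] by simp
  then show ?thesis by simp
qed

lemma positive_op_norm_le:
  fixes B :: "'a::chilbert_space \<Rightarrow> 'a"
  assumes B: "positive_op B" and le: "\<And>x. Re (cinner (B x) x) \<le> (norm x)\<^sup>2"
  shows "norm (B x) \<le> norm x"
proof (cases "B x = 0")
  case True then show ?thesis by simp
next
  case False
  have "(cmod (cinner (B x) (B x)))\<^sup>2 \<le> Re (cinner (B x) x) * Re (cinner (B (B x)) (B x))"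
    by (rule positive_op_Cauchy_Schwarz[OF B])
  also have "\<dots> \<le> (norm x)\<^sup>2 * (norm (B x))\<^sup>2"
    using le positive_op_Re_nonneg[OF B] by (intro mult_mono) auto
  also have "cmod (cinner (B x) (B x)) = (norm (B x))\<^sup>2" by (simp add: cinner_self del: of_real_power)
  finally have "(norm (B x))\<^sup>2 * (norm (B x))\<^sup>2 \<le> (norm x)\<^sup>2 * (norm (B x))\<^sup>2"
    by (simp only: power2_eq_square[of "(norm (B x))\<^sup>2"])
  moreover have "(norm (B x))\<^sup>2 > 0" using False by simp
  ultimately have "(norm (B x))\<^sup>2 \<le> (norm x)\<^sup>2" by (simp only: mult_le_cancel_right_pos)
  then show ?thesis by (rule power2_le_imp_le) simp
qed

section \<open>The square root of a positive operator\<close>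

text \<open>Taylor coefficients of \<open>\<surd>(1 - t) = (\<Sum>k. sqrt_coeff k * t ^ k)\<close>.\<close>

definition sqrt_coeff :: "nat \<Rightarrow> real" where
  "sqrt_coeff k = ((1/2::real) gchoose k) * (-1) ^ k"

lemma sqrt_coeff_0 [simp]: "sqrt_coeff 0 = 1"
  by (simp add: sqrt_coeff_def)

lemma sqrt_coeff_Suc: "sqrt_coeff (Suc k) = sqrt_coeff k * ((of_nat k - 1/2) / of_nat (Suc k))"
proof -
  have "of_nat (Suc k) * ((1/2::real) gchoose Suc k) = (1/2 - of_nat k) * (1/2 gchoose k)"
    by (simp only: gbinomial_absorption gbinomial_absorb_comp)
  then have Suc_eq: "(1/2::real) gchoose Suc k = (1/2 - of_nat k) * (1/2 gchoose k) / of_nat (Suc k)"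
    by (simp add: eq_divide_eq mult.commute del: of_nat_Suc)
  show ?thesis
    unfolding sqrt_coeff_def Suc_eq by (simp add: field_simps del: of_nat_Suc)
qed

lemma sqrt_coeff_nonpos: "k \<ge> 1 \<Longrightarrow> sqrt_coeff k \<le> 0"
proof (induct k)
  case 0 then show ?case by simp
next
  case (Suc k)
  show ?case
  proof (cases "k = 0")
    case True then show ?thesis by (simp add: sqrt_coeff_Suc)
  next
    case False
    then have "sqrt_coeff k \<le> 0" using Suc by simp
    moreover have "(of_nat k - 1/2) / of_nat (Suc k) \<ge> (0::real)" using False by simp
    ultimately show ?thesis by (simp only: sqrt_coeff_Suc mult_nonpos_nonneg)
  qed
qed

lemma sum_sqrt_coeff_nonneg: "(\<Sum>k\<le>m. sqrt_coeff k) \<ge> 0"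
proof -
  have "(\<Sum>k\<le>m. sqrt_coeff k) = (- 1) ^ m * ((1/2::real) - 1 gchoose m)"
    unfolding sqrt_coeff_def by (rule gbinomial_sum_lower_neg)
  also have "((1/2::real) - 1 gchoose m) = (-1) ^ m * ((of_nat m - 1/2) gchoose m)"
    using gbinomial_negated_upper[of "(1/2::real) - 1" m] by simp
  finally have "(\<Sum>k\<le>m. sqrt_coeff k) = ((of_nat m - 1/2 :: real) gchoose m)"
    by (simp add: power_mult_distrib[symmetric])
  also have "\<dots> = (\<Prod>i = 0..<m. (of_nat m - 1/2 - of_nat i) / of_nat (m - i))"
    by (rule gbinomial_altdef_of_nat)
  also have "\<dots> \<ge> 0"
    by (rule prod_nonneg) auto
  finally show ?thesis .
qed

lemma sum_abs_sqrt_coeff_Suc_le: "(\<Sum>k<m. \<bar>sqrt_coeff (Suc k)\<bar>) \<le> 1"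
proof -
  have "(\<Sum>k<m. \<bar>sqrt_coeff (Suc k)\<bar>) = - (\<Sum>k<m. sqrt_coeff (Suc k))"
    by (simp add: sum_negf[symmetric] sqrt_coeff_nonpos abs_of_nonpos)
  also have "(\<Sum>k<m. sqrt_coeff (Suc k)) = (\<Sum>k\<le>m. sqrt_coeff k) - 1"
    by (simp only: lessThan_Suc_atMost[symmetric] sum.lessThan_Suc_shift sqrt_coeff_0)
  finally show ?thesis using sum_sqrt_coeff_nonneg[of m] by simp
qed

lemma summable_abs_sqrt_coeff_Suc: "summable (\<lambda>k. \<bar>sqrt_coeff (Suc k)\<bar>)"
  by (rule summableI_nonneg_bounded[where x=1]) (auto simp: sum_abs_sqrt_coeff_Suc_le)

lemma suminf_abs_sqrt_coeff_Suc_le: "(\<Sum>k. \<bar>sqrt_coeff (Suc k)\<bar>) \<le> 1"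
  by (rule suminf_le_const[OF summable_abs_sqrt_coeff_Suc sum_abs_sqrt_coeff_Suc_le])

lemma summable_abs_sqrt_coeff: "summable (\<lambda>k. \<bar>sqrt_coeff k\<bar>)"
  using summable_abs_sqrt_coeff_Suc by (subst summable_Suc_iff[symmetric])

lemma suminf_abs_sqrt_coeff_le: "(\<Sum>k. \<bar>sqrt_coeff k\<bar>) \<le> 2"
  using suminf_split_head[OF summable_abs_sqrt_coeff] suminf_abs_sqrt_coeff_Suc_le by simp

lemma sum_abs_sqrt_coeff_le: "(\<Sum>k<n. \<bar>sqrt_coeff k\<bar>) \<le> 2"
  using sum_le_suminf[OF summable_abs_sqrt_coeff, of "{..<n}"] suminf_abs_sqrt_coeff_le by simp

text \<open>The Cauchy square of the series is \<open>1 - t\<close>, by Vandermonde's identity.\<close>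

lemma sqrt_coeff_convolution:
  "(\<Sum>i\<le>n. sqrt_coeff i * sqrt_coeff (n - i)) = (if n = 0 then 1 else if n = 1 then -1 else 0)"
proof -
  have "(\<Sum>i\<le>n. sqrt_coeff i * sqrt_coeff (n - i))
      = (\<Sum>i\<le>n. ((1/2::real) gchoose i) * ((1/2) gchoose (n - i))) * (-1) ^ n"
    unfolding sqrt_coeff_def sum_distrib_right
    by (intro sum.cong refl) (auto simp: power_add[symmetric] algebra_simps)
  also have "(\<Sum>i\<le>n. ((1/2::real) gchoose i) * ((1/2) gchoose (n - i))) = (1/2 + 1/2) gchoose n"
    using gbinomial_Vandermonde[of "1/2::real" "1/2" n] by (simp add: atMost_atLeast0)
  also have "(1/2 + 1/2 :: real) gchoose n = of_nat (1 choose n)"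
    by (simp add: binomial_gbinomial)
  finally show ?thesis
    by (cases n; cases "n - 1") (auto simp: binomial_eq_0)
qed

lemma dominated_square_minus_triangle_tendsto_0:
  fixes G :: "nat \<Rightarrow> nat \<Rightarrow> 'a::real_normed_vector"
  assumes bound: "\<And>i j. norm (G i j) \<le> \<alpha> i * \<beta> j"
    and "summable \<alpha>" "summable \<beta>" and nonneg: "\<And>i. \<alpha> i \<ge> 0" "\<And>j. \<beta> j \<ge> 0"
  shows "(\<lambda>n. \<Sum>(i, j)\<in>{..<n} \<times> {..<n} - {(i, j). i + j < n}. G i j) \<longlonglongrightarrow> 0"
proof -
  let ?S1 = "\<lambda>n::nat. {..<n} \<times> {..<n}"
  let ?S2 = "\<lambda>n::nat. {(i, j). i + j < n}"
  let ?f = "\<lambda>(i, j). \<alpha> i * \<beta> j"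
  have f_nonneg: "0 \<le> ?f x" for x using nonneg by (auto split: prod.split)
  then have norm_sum_f: "norm (sum ?f A) = sum ?f A" for A by (simp add: sum_nonneg)
  have "(\<lambda>n. sum ?f (?S1 n)) \<longlonglongrightarrow> (\<Sum>k. \<alpha> k) * (\<Sum>k. \<beta> k)"
    using tendsto_mult[OF summable_LIMSEQ summable_LIMSEQ, OF assms(2,3)]
    by (simp only: sum_product sum.Sigma[rule_format] finite_lessThan)
  then have Cauchy: "Cauchy (\<lambda>n. sum ?f (?S1 n))"
    by (intro convergent_Cauchy convergentI)
  have "Zfun (\<lambda>n. sum ?f (?S1 n - ?S2 n)) sequentially"
  proof (rule ZfunI)
    fix r :: real assume r: "0 < r"
    from CauchyD[OF Cauchy r] obtain N
      where N: "\<And>m n. N \<le> m \<Longrightarrow> N \<le> n \<Longrightarrow> norm (sum ?f (?S1 m) - sum ?f (?S1 n)) < r"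
      by blast
    have "sum ?f (?S1 n - ?S2 n) < r" if "2 * N \<le> n" for n
    proof -
      have "sum ?f (?S1 n - ?S2 n) \<le> sum ?f (?S1 n - ?S1 (n div 2))"
        by (intro sum_mono2 f_nonneg) auto
      also have "\<dots> = sum ?f (?S1 n) - sum ?f (?S1 (n div 2))"
        by (intro sum_diff) auto
      also have "\<dots> < r"
        using N[of n "n div 2"] that by (simp add: abs_less_iff)
      finally show ?thesis .
    qed
    then show "\<forall>\<^sub>F n in sequentially. norm (sum ?f (?S1 n - ?S2 n)) < r"
      unfolding eventually_sequentially norm_sum_f by blast
  qed
  moreover have "\<forall>n. norm (\<Sum>(i, j)\<in>?S1 n - ?S2 n. G i j) \<le> norm (sum ?f (?S1 n - ?S2 n))"
    unfolding norm_sum_f by (intro allI order_trans[OF norm_sum sum_mono]) (auto simp: bound)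
  ultimately have "Zfun (\<lambda>n. \<Sum>(i, j)\<in>?S1 n - ?S2 n. G i j) sequentially"
    by (rule Zfun_le)
  then show ?thesis by (simp only: tendsto_Zfun_iff diff_0_right)
qed

lemma double_series_triangle:
  fixes G :: "nat \<Rightarrow> nat \<Rightarrow> 'a::real_normed_vector"
  assumes "\<And>i j. norm (G i j) \<le> \<alpha> i * \<beta> j"
    and "summable \<alpha>" "summable \<beta>" "\<And>i. \<alpha> i \<ge> 0" "\<And>j. \<beta> j \<ge> 0"
    and square: "(\<lambda>n. \<Sum>i<n. \<Sum>j<n. G i j) \<longlonglongrightarrow> L"
  shows "(\<lambda>k. \<Sum>i\<le>k. G i (k - i)) sums L"
proof -
  let ?S1 = "\<lambda>n::nat. {..<n} \<times> {..<n}"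
  let ?S2 = "\<lambda>n::nat. {(i, j). i + j < n}"
  let ?g = "\<lambda>(i, j). G i j"
  have fin: "finite (?S1 n)" "?S2 n \<subseteq> ?S1 n" for n by auto
  have "(\<lambda>n. sum ?g (?S1 n)) \<longlonglongrightarrow> L"
    using square by (simp only: sum.cartesian_product split_def)
  moreover have "(\<lambda>n. sum ?g (?S1 n - ?S2 n)) \<longlonglongrightarrow> 0"
    by (rule dominated_square_minus_triangle_tendsto_0[OF assms(1-5)])
  then have "(\<lambda>n. sum ?g (?S1 n) - sum ?g (?S2 n)) \<longlonglongrightarrow> 0"
    by (simp only: sum_diff[OF fin])
  ultimately have "(\<lambda>n. sum ?g (?S2 n)) \<longlonglongrightarrow> L"
    by (rule Lim_transform2)
  then show ?thesis
    by (simp only: sums_def sum.triangle_reindex)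
qed

text \<open>For a positive \<open>A\<close> with \<open>\<parallel>A\<parallel> \<le> s\<close> the operator \<open>X = I - A/s\<close> is a positive
  contraction, and \<open>\<surd>s \<cdot> \<surd>(I - X)\<close>, with \<open>\<surd>(I - X)\<close> given by the binomial series,
  is a positive square root of \<open>A\<close>.\<close>

locale sqrt_construction =
  fixes A :: "'a::chilbert_space \<Rightarrow> 'a" and s :: real
  assumes positive_A: "positive_op A" and s_pos: "s > 0" and norm_A: "\<And>x. norm (A x) \<le> s * norm x"
begin

definition X :: "'a \<Rightarrow> 'a" where
  "X x = x - scaleC (of_real (1/s)) (A x)"

lemma bounded_clinear_A: "bounded_clinear A"
  using positive_A by (rule positive_op_bounded_clinear)

lemma bounded_clinear_X: "bounded_clinear X"
  unfolding X_def[abs_def]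
  by (intro bounded_clinear_diff bounded_clinear_ident bounded_clinear_scaleC bounded_clinear_A)

lemma cinner_X_self: "cinner (X x) x = cinner x x - of_real (1/s) * cinner (A x) x"
  by (simp add: X_def cinner_diff_left cinner_scaleC_left)

lemma positive_op_X: "positive_op X"
  unfolding positive_op_def
proof (intro conjI allI bounded_clinear_X)
  fix x
  show "Im (cinner (X x) x) = 0" by (simp add: cinner_X_self positive_op_Im_eq_0[OF positive_A])
  have "Re (cinner (A x) x) \<le> cmod (cinner (A x) x)" by (rule complex_Re_le_cmod)
  also have "\<dots> \<le> norm (A x) * norm x" by (rule cinner_Cauchy_Schwarz)
  also have "\<dots> \<le> s * norm x * norm x" using norm_A by (simp add: mult_right_mono)
  finally have "Re (cinner (A x) x) / s \<le> (norm x)\<^sup>2"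
    using s_pos by (simp add: divide_le_eq power2_eq_square ac_simps)
  then show "0 \<le> Re (cinner (X x) x)" by (simp add: cinner_X_self Re_cinner_self)
qed

lemma norm_X_pow_le: "norm ((X ^^ k) x) \<le> norm x"
proof -
  have contraction: "norm (X y) \<le> norm y" for y
  proof (rule positive_op_norm_le[OF positive_op_X])
    fix z
    show "Re (cinner (X z) z) \<le> (norm z)\<^sup>2"
      using positive_op_Re_nonneg[OF positive_A, of z] s_pos
      by (simp add: cinner_X_self Re_cinner_self)
  qed
  show ?thesis by (induct k) (auto intro: order_trans[OF contraction])
qed

lemma bounded_clinear_X_pow: "bounded_clinear (X ^^ k)"
  by (rule bounded_clinear_funpow[OF bounded_clinear_X])

lemma X_pow_selfadjoint: "cinner ((X ^^ k) x) y = cinner x ((X ^^ k) y)"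
proof (induct k arbitrary: x y)
  case 0 then show ?case by simp
next
  case (Suc k)
  have "cinner ((X ^^ Suc k) x) y = cinner ((X ^^ k) x) (X y)"
    using positive_op_selfadjoint[OF positive_op_X] by simp
  also have "\<dots> = cinner x ((X ^^ Suc k) y)" by (simp add: Suc funpow_swap1)
  finally show ?case .
qed

lemma Im_cinner_X_pow_self: "Im (cinner ((X ^^ k) x) x) = 0"
proof -
  have "cinner ((X ^^ k) x) x = cnj (cinner ((X ^^ k) x) x)"
    by (metis X_pow_selfadjoint cinner_commute)
  then have "Im (cinner ((X ^^ k) x) x) = Im (cnj (cinner ((X ^^ k) x) x))" by (rule arg_cong)
  then show ?thesis by simp
qed

lemma abs_Re_cinner_X_pow_self_le: "\<bar>Re (cinner ((X ^^ k) x) x)\<bar> \<le> (norm x)\<^sup>2"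
proof -
  have "\<bar>Re (cinner ((X ^^ k) x) x)\<bar> \<le> cmod (cinner ((X ^^ k) x) x)" by (rule abs_Re_le_cmod)
  also have "\<dots> \<le> norm ((X ^^ k) x) * norm x" by (rule cinner_Cauchy_Schwarz)
  also have "\<dots> \<le> norm x * norm x" by (intro mult_right_mono norm_X_pow_le) auto
  finally show ?thesis by (simp add: power2_eq_square)
qed

definition Y :: "'a \<Rightarrow> 'a" where
  "Y x = (\<Sum>k. scaleR (sqrt_coeff k) ((X ^^ k) x))"

lemma norm_Y_term_le: "norm (scaleR (sqrt_coeff k) ((X ^^ k) x)) \<le> \<bar>sqrt_coeff k\<bar> * norm x"
  using mult_left_mono[OF norm_X_pow_le[of k x] abs_ge_zero[of "sqrt_coeff k"]] by simp

lemma summable_norm_Y_terms: "summable (\<lambda>k. norm (scaleR (sqrt_coeff k) ((X ^^ k) x)))"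
  by (rule summable_comparison_test'[where N=0,
        OF summable_mult2[OF summable_abs_sqrt_coeff, of "norm x"]])
    (use norm_Y_term_le in simp)

lemma summable_Y_terms: "summable (\<lambda>k. scaleR (sqrt_coeff k) ((X ^^ k) x))"
  by (rule summable_norm_cancel[OF summable_norm_Y_terms])

lemma norm_Y_le: "norm (Y x) \<le> 2 * norm x"
proof -
  have "norm (Y x) \<le> (\<Sum>k. norm (scaleR (sqrt_coeff k) ((X ^^ k) x)))"
    unfolding Y_def by (rule summable_norm[OF summable_norm_Y_terms])
  also have "\<dots> \<le> (\<Sum>k. \<bar>sqrt_coeff k\<bar> * norm x)"
    by (intro suminf_le norm_Y_term_le summable_norm_Y_terms summable_mult2 summable_abs_sqrt_coeff)
  also have "\<dots> = (\<Sum>k. \<bar>sqrt_coeff k\<bar>) * norm x"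
    by (intro suminf_mult2[symmetric] summable_abs_sqrt_coeff)
  also have "\<dots> \<le> 2 * norm x" by (intro mult_right_mono suminf_abs_sqrt_coeff_le) auto
  finally show ?thesis .
qed

lemma bounded_clinear_Y: "bounded_clinear Y"
proof (rule bounded_clinearI[where K=2])
  fix x y
  show "Y (x + y) = Y x + Y y"
    unfolding Y_def
    by (simp add: clinear_add[OF bounded_clinear_X_pow] scaleR_add_right
        suminf_add[OF summable_Y_terms summable_Y_terms])
  fix c
  have "scaleC c (Y x) = (\<Sum>k. scaleC c (scaleR (sqrt_coeff k) ((X ^^ k) x)))"
    unfolding Y_def by (rule bounded_linear.suminf[OF bounded_linear_scaleC_right summable_Y_terms])
  also have "\<dots> = Y (scaleC c x)"
    by (simp add: Y_def clinear_scaleC[OF bounded_clinear_X_pow] scaleC_scaleR_commute)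
  finally show "Y (scaleC c x) = scaleC c (Y x)" by simp
next
  fix x show "norm (Y x) \<le> norm x * 2" using norm_Y_le by (simp add: mult.commute)
qed

lemma Y_commute:
  assumes C: "bounded_clinear C" and CX: "\<And>x. C (X x) = X (C x)"
  shows "C (Y x) = Y (C x)"
proof -
  have "C (Y x) = (\<Sum>k. C (scaleR (sqrt_coeff k) ((X ^^ k) x)))"
    unfolding Y_def by (rule clinear_suminf[OF C summable_Y_terms])
  also have "\<dots> = Y (C x)"
    by (simp add: Y_def clinear_scaleR[OF C] funpow_intertwining[of C X X, OF CX])
  finally show ?thesis .
qed

lemma cinner_Y_self: "cinner (Y x) x = of_real (\<Sum>k. sqrt_coeff k * Re (cinner ((X ^^ k) x) x))"
  and summable_Y_form: "summable (\<lambda>k. sqrt_coeff k * Re (cinner ((X ^^ k) x) x))"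
proof -
  define r where "r = (\<lambda>k. sqrt_coeff k * Re (cinner ((X ^^ k) x) x))"
  show r: "summable (\<lambda>k. sqrt_coeff k * Re (cinner ((X ^^ k) x) x))"
    by (rule summable_comparison_test'[where N=0,
          OF summable_mult2[OF summable_abs_sqrt_coeff, of "(norm x)\<^sup>2"]])
      (simp only: real_norm_def abs_mult mult_left_mono[OF abs_Re_cinner_X_pow_self_le abs_ge_zero])
  have "cinner (Y x) x = (\<Sum>k. cinner (scaleR (sqrt_coeff k) ((X ^^ k) x)) x)"
    unfolding Y_def by (rule bounded_linear.suminf[OF bounded_linear_cinner_left summable_Y_terms])
  also have "\<dots> = (\<Sum>k. of_real (r k))"
  proof -
    have "cinner (scaleR (sqrt_coeff k) ((X ^^ k) x)) x = of_real (r k)" for k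
      by (simp add: r_def cinner_scaleR_left complex_eq_iff Im_cinner_X_pow_self)
    then show ?thesis by simp
  qed
  also have "\<dots> = of_real (suminf r)"
    using r by (simp add: r_def suminf_of_real)
  finally show "cinner (Y x) x = of_real (\<Sum>k. sqrt_coeff k * Re (cinner ((X ^^ k) x) x))"
    by (simp add: r_def)
qed

text \<open>The leading term \<open>\<parallel>x\<parallel>\<^sup>2\<close> dominates the rest, since \<open>\<Sum>k\<ge>1. \<bar>sqrt_coeff k\<bar> \<le> 1\<close>.\<close>

lemma positive_op_Y: "positive_op Y"
  unfolding positive_op_def
proof (intro conjI allI bounded_clinear_Y)
  fix x
  define r where "r k = sqrt_coeff k * Re (cinner ((X ^^ k) x) x)" for k
  have r: "summable r" unfolding r_def by (rule summable_Y_form)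
  show "Im (cinner (Y x) x) = 0" by (simp add: cinner_Y_self)
  have bound: "\<bar>r (Suc k)\<bar> \<le> \<bar>sqrt_coeff (Suc k)\<bar> * (norm x)\<^sup>2" for k
    unfolding r_def abs_mult by (rule mult_left_mono[OF abs_Re_cinner_X_pow_self_le abs_ge_zero])
  have "- (\<bar>sqrt_coeff (Suc k)\<bar> * (norm x)\<^sup>2) \<le> r (Suc k)" for k
    using bound[of k] by linarith
  then have "(\<Sum>k. - (\<bar>sqrt_coeff (Suc k)\<bar> * (norm x)\<^sup>2)) \<le> (\<Sum>k. r (Suc k))"
    by (rule suminf_le)
      (simp_all add: summable_Suc_iff r summable_minus summable_mult2 summable_abs_sqrt_coeff_Suc)
  moreover have "(\<Sum>k. - (\<bar>sqrt_coeff (Suc k)\<bar> * (norm x)\<^sup>2))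
      = - ((\<Sum>k. \<bar>sqrt_coeff (Suc k)\<bar>) * (norm x)\<^sup>2)"
    by (simp add: suminf_minus summable_mult2 summable_abs_sqrt_coeff_Suc suminf_mult2)
  moreover have "(\<Sum>k. \<bar>sqrt_coeff (Suc k)\<bar>) * (norm x)\<^sup>2 \<le> 1 * (norm x)\<^sup>2"
    by (intro mult_right_mono suminf_abs_sqrt_coeff_Suc_le) auto
  moreover have "suminf r = (\<Sum>k. r (Suc k)) + (norm x)\<^sup>2"
    using suminf_split_head[OF r] by (simp add: r_def Re_cinner_self)
  ultimately show "0 \<le> Re (cinner (Y x) x)"
    by (simp add: cinner_Y_self r_def[symmetric])
qed

definition Y_partial :: "nat \<Rightarrow> 'a \<Rightarrow> 'a" where
  "Y_partial n x = (\<Sum>i<n. scaleR (sqrt_coeff i) ((X ^^ i) x))"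

lemma norm_Y_partial_le: "norm (Y_partial n x) \<le> 2 * norm x"
proof -
  have "norm (Y_partial n x) \<le> (\<Sum>i<n. norm (scaleR (sqrt_coeff i) ((X ^^ i) x)))"
    unfolding Y_partial_def by (rule norm_sum)
  also have "\<dots> \<le> (\<Sum>i<n. \<bar>sqrt_coeff i\<bar>) * norm x"
    unfolding sum_distrib_right by (intro sum_mono norm_Y_term_le)
  also have "\<dots> \<le> 2 * norm x" by (intro mult_right_mono sum_abs_sqrt_coeff_le) auto
  finally show ?thesis .
qed

lemma Y_partial_tendsto: "(\<lambda>n. Y_partial n x) \<longlonglongrightarrow> Y x"
  unfolding Y_partial_def Y_def by (rule summable_LIMSEQ[OF summable_Y_terms])

lemma Y_partial_diff: "Y_partial n x - Y_partial n y = Y_partial n (x - y)"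
  unfolding Y_partial_def
  by (simp add: clinear_diff[OF bounded_clinear_X_pow] scaleR_diff_right sum_subtractf)

lemma Y_partial_Y_partial:
  "Y_partial n (Y_partial n x) = (\<Sum>i<n. \<Sum>j<n. scaleR (sqrt_coeff i * sqrt_coeff j) ((X ^^ (i + j)) x))"
  unfolding Y_partial_def
  by (simp add: clinear_sum[OF bounded_clinear_X_pow] clinear_scaleR[OF bounded_clinear_X_pow]
      scaleR_sum_right funpow_add)

lemma Y_partial_Y_partial_tendsto: "(\<lambda>n. Y_partial n (Y_partial n x)) \<longlonglongrightarrow> Y (Y x)"
proof -
  have "(\<lambda>n. Y_partial n (Y_partial n x - Y x)) \<longlonglongrightarrow> 0"
  proof (rule Lim_null_comparison)
    show "\<forall>\<^sub>F n in sequentially. norm (Y_partial n (Y_partial n x - Y x)) \<le> 2 * norm (Y_partial n x - Y x)"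
      by (intro always_eventually allI norm_Y_partial_le)
    show "(\<lambda>n. 2 * norm (Y_partial n x - Y x)) \<longlonglongrightarrow> 0"
      by (intro tendsto_mult_right_zero tendsto_norm_zero LIM_zero Y_partial_tendsto)
  qed
  moreover have "(\<lambda>n. Y_partial n (Y x) - Y (Y x)) \<longlonglongrightarrow> 0"
    by (rule LIM_zero[OF Y_partial_tendsto])
  ultimately have "(\<lambda>n. Y_partial n (Y_partial n x - Y x) + (Y_partial n (Y x) - Y (Y x))) \<longlonglongrightarrow> 0"
    using tendsto_add by fastforce
  then have "(\<lambda>n. Y_partial n (Y_partial n x) - Y (Y x)) \<longlonglongrightarrow> 0"
    by (simp add: Y_partial_diff[symmetric])
  then show ?thesis by (rule LIM_zero_cancel)
qed

lemma Y_Y: "Y (Y x) = x - X x"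
proof -
  define G where "G i j = scaleR (sqrt_coeff i * sqrt_coeff j) ((X ^^ (i + j)) x)" for i j
  have "norm (G i j) \<le> \<bar>sqrt_coeff i\<bar> * (\<bar>sqrt_coeff j\<bar> * norm x)" for i j
    using mult_left_mono[OF norm_X_pow_le[of "i + j" x], of "\<bar>sqrt_coeff i * sqrt_coeff j\<bar>"]
    by (simp add: G_def abs_mult ac_simps)
  moreover have "(\<lambda>n. \<Sum>i<n. \<Sum>j<n. G i j) \<longlonglongrightarrow> Y (Y x)"
    using Y_partial_Y_partial_tendsto unfolding Y_partial_Y_partial G_def .
  ultimately have "(\<lambda>k. \<Sum>i\<le>k. G i (k - i)) sums Y (Y x)"
    by (intro double_series_triangle[where \<alpha>="\<lambda>i. \<bar>sqrt_coeff i\<bar>"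
          and \<beta>="\<lambda>j. \<bar>sqrt_coeff j\<bar> * norm x"] summable_abs_sqrt_coeff summable_mult2) auto
  moreover have "(\<Sum>i\<le>k. G i (k - i))
      = scaleR (if k = 0 then 1 else if k = 1 then -1 else 0) ((X ^^ k) x)" for k
    by (simp add: G_def scaleR_sum_left[symmetric] sqrt_coeff_convolution del: scaleR_sum_left)
  ultimately have "(\<lambda>k. scaleR (if k = 0 then 1 else if k = 1 then -1 else 0) ((X ^^ k) x))
      sums Y (Y x)"
    by simp
  moreover have "(\<lambda>k. scaleR (if k = 0 then 1 else if k = 1 then -1 else 0) ((X ^^ k) x))
      sums (x - X x)"
    using sums_finite[of "{0, 1}" "\<lambda>k. scaleR (if k = 0 then 1 else if k = 1 then -1 else 0) ((X ^^ k) x)"]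
    by simp
  ultimately show ?thesis by (rule sums_unique2)
qed

definition root :: "'a \<Rightarrow> 'a" where
  "root x = scaleC (of_real (sqrt s)) (Y x)"

lemma bounded_clinear_root: "bounded_clinear root"
  unfolding root_def[abs_def] by (intro bounded_clinear_scaleC bounded_clinear_Y)

lemma positive_op_root: "positive_op root"
  unfolding positive_op_def
proof (intro conjI allI bounded_clinear_root)
  fix x
  have "cinner (root x) x = of_real (sqrt s) * cinner (Y x) x"
    by (simp add: root_def cinner_scaleC_left)
  then show "Im (cinner (root x) x) = 0" "0 \<le> Re (cinner (root x) x)"
    using positive_op_Im_eq_0[OF positive_op_Y, of x] positive_op_Re_nonneg[OF positive_op_Y, of x]
      s_pos by auto
qed

lemma root_root: "root (root x) = A x"
proof -
  have "root (root x) = scaleC (of_real (sqrt s) * of_real (sqrt s)) (Y (Y x))"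
    by (simp add: root_def clinear_scaleC[OF bounded_clinear_Y] scaleC_scaleC)
  also have "of_real (sqrt s) * of_real (sqrt s) = (of_real s :: complex)"
    using s_pos by (simp flip: of_real_mult)
  also have "Y (Y x) = scaleC (of_real (1/s)) (A x)" by (simp add: Y_Y X_def)
  also have "scaleC (of_real s) (scaleC (of_real (1/s)) (A x)) = A x"
    using s_pos by (simp add: scaleC_scaleC scaleC_one flip: of_real_mult)
  finally show ?thesis .
qed

text \<open>A second positive square root \<open>C\<close> commutes with \<open>A\<close>, hence with the power series \<open>root\<close>.\<close>

lemma positive_sqrt_unique:
  assumes C: "positive_op C" and CC: "\<And>x. C (C x) = A x"
  shows "C = root"
proof
  fix x
  have Cb: "bounded_clinear C" using C by (rule positive_op_bounded_clinear)
  have "C (X x) = X (C x)" for x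
    by (simp add: X_def clinear_diff[OF Cb] clinear_scaleC[OF Cb] flip: CC)
  then have C_root: "C (root x) = root (C x)" for x
    by (simp add: root_def clinear_scaleC[OF Cb] Y_commute[OF Cb])
  define y where "y = root x - C x"
  have "root y + C y = 0"
    by (simp add: y_def clinear_diff[OF bounded_clinear_root] clinear_diff[OF Cb] root_root CC C_root)
  then have "Re (cinner (root y) y) + Re (cinner (C y) y) = 0"
    by (metis cinner_add_left cinner_zero_left plus_complex.simps(1) zero_complex.simps(1))
  then have "Re (cinner (root y) y) = 0" "Re (cinner (C y) y) = 0"
    using positive_op_Re_nonneg[OF positive_op_root, of y] positive_op_Re_nonneg[OF C, of y]
    by linarith+
  then have "root y = 0" "C y = 0"
    using positive_op_eq_0_if_form_eq_0[OF positive_op_root] positive_op_eq_0_if_form_eq_0[OF C]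
    by auto
  then have "cinner y y = 0"
    by (simp add: y_def cinner_diff_left positive_op_selfadjoint[OF positive_op_root, of x]
        positive_op_selfadjoint[OF C, of x])
  then show "C x = root x" by (simp add: y_def)
qed

end

lemma sqrt_op:
  fixes A :: "'a::chilbert_space \<Rightarrow> 'a"
  assumes A: "positive_op A"
  shows "positive_op (sqrt_op A)" and "sqrt_op A (sqrt_op A x) = A x"
proof -
  obtain K where K: "K > 0" "\<forall>x. norm (A x) \<le> norm x * K"
    using bounded_clinear_pos_bounded[OF positive_op_bounded_clinear[OF A]] by blast
  interpret sqrt_construction A K
    by unfold_locales (use A K in \<open>auto simp: mult.commute\<close>)
  have "sqrt_op A = root"
    unfolding sqrt_op_def
  proof (rule the_equality)
    show "positive_op root \<and> root \<circ> root = A" using positive_op_root root_root by (auto simp: o_def)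
    fix C assume "positive_op C \<and> C \<circ> C = A"
    then show "C = root" by (intro positive_sqrt_unique) (auto simp: o_def dest: fun_cong)
  qed
  then show "positive_op (sqrt_op A)" and "sqrt_op A (sqrt_op A x) = A x"
    using positive_op_root root_root by simp_all
qed

section \<open>The closed graph theorem\<close>

lemma Baire_interior_closure_nonempty:
  fixes E :: "nat \<Rightarrow> 'a::{real_normed_vector, complete_space} set"
  assumes "\<And>x. \<exists>n. x \<in> E n"
  shows "\<exists>n. interior (closure (E n)) \<noteq> {}"
proof (rule ccontr)
  assume "\<not> ?thesis"
  then have empty: "\<And>n. interior (closure (E n)) = {}" by blast
  have "euclidean interior_of \<Union>(range (\<lambda>n. closure (E n))) = {}"
  proof (rule Baire_category_alt)
    show "completely_metrizable_space (euclidean :: 'a topology) \<or>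
        locally_compact_space (euclidean :: 'a topology) \<and> regular_space (euclidean :: 'a topology)"
      using completely_metrizable_space_euclidean by blast
    show "countable (range (\<lambda>n. closure (E n)))" by simp
    fix T assume "T \<in> range (\<lambda>n. closure (E n))"
    then show "closedin euclidean T \<and> euclidean interior_of T = {}"
      using empty by (auto simp: closed_closedin[symmetric])
  qed
  moreover have "\<Union>(range (\<lambda>n. closure (E n))) = UNIV"
    using assms closure_subset by blast
  ultimately show False by simp
qed

lemma approximation_from_dense_sublevel_set:
  fixes R :: "'a::real_normed_vector \<Rightarrow> 'b::real_normed_vector"
  assumes lin: "linear R" and dense: "ball x0 r \<subseteq> closure {x. norm (R x) \<le> c}"
    and "norm z < r" "e > 0"
  shows "\<exists>w. norm (z - w) < e \<and> norm (R w) \<le> 2 * c"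
proof -
  have "x0 + z \<in> ball x0 r" "x0 \<in> ball x0 r" using assms(3) order.strict_trans1[OF norm_ge_zero assms(3)]
    by (simp_all add: dist_norm)
  then have "x0 + z \<in> closure {x. norm (R x) \<le> c}" "x0 \<in> closure {x. norm (R x) \<le> c}"
    using subsetD[OF dense] by blast+
  then obtain u v where uv: "norm (R u) \<le> c" "dist u (x0 + z) < e / 2" "norm (R v) \<le> c"
      "dist v x0 < e / 2"
    unfolding closure_approachable using half_gt_zero[OF \<open>e > 0\<close>] by blast
  have "z - (u - v) = - ((u - (x0 + z)) - (v - x0))" by (simp add: algebra_simps)
  then have "norm (z - (u - v)) = norm ((u - (x0 + z)) - (v - x0))"
    by (simp only: norm_minus_cancel)
  also have "\<dots> < e"
    using uv norm_triangle_ineq4[of "u - (x0 + z)" "v - x0"] by (simp add: dist_norm)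
  finally have "norm (z - (u - v)) < e" .
  moreover have "norm (R (u - v)) \<le> 2 * c"
    using uv norm_triangle_ineq4[of "R u" "R v"] by (simp add: linear_diff[OF lin])
  ultimately show ?thesis by blast
qed

text \<open>Baire's theorem makes some sublevel set \<open>{x. \<parallel>R x\<parallel> \<le> n}\<close> dense in a ball; rescaling,
  every \<open>z\<close> is approximated up to \<open>\<parallel>z\<parallel>/2\<close> by some \<open>w\<close> with \<open>\<parallel>R w\<parallel> \<le> C \<parallel>z\<parallel>\<close>.\<close>

lemma linear_approximately_bounded:
  fixes R :: "'a::banach \<Rightarrow> 'b::real_normed_vector"
  assumes lin: "linear R"
  obtains C where "C \<ge> 0" "\<And>z. \<exists>w. norm (z - w) \<le> norm z / 2 \<and> norm (R w) \<le> C * norm z"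
proof -
  have "\<exists>n. x \<in> {x. norm (R x) \<le> real n}" for x
    using real_arch_simple[of "norm (R x)"] by auto
  then obtain n where "interior (closure {x. norm (R x) \<le> real n}) \<noteq> {}"
    using Baire_interior_closure_nonempty[of "\<lambda>n. {x. norm (R x) \<le> real n}"] by blast
  then obtain x0 r where r: "r > 0" "ball x0 r \<subseteq> closure {x. norm (R x) \<le> real n}"
    using mem_interior by blast
  define C where "C = 4 * real n / r"
  have "\<exists>w. norm (z - w) \<le> norm z / 2 \<and> norm (R w) \<le> C * norm z" for z
  proof (cases "z = 0")
    case True then show ?thesis by (intro exI[of _ 0]) (simp add: linear_0[OF lin])
  next
    case False
    define t where "t = r / (2 * norm z)"
    have t: "t > 0" "norm (scaleR t z) < r" using r False by (simp_all add: t_def)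
    then obtain w where w: "norm (scaleR t z - w) < t * (norm z / 2)" "norm (R w) \<le> 2 * n"
      using approximation_from_dense_sublevel_set[OF lin r(2), of "scaleR t z" "t * (norm z / 2)"]
        False by auto
    have "z - scaleR (1/t) w = scaleR (1/t) (scaleR t z - w)" using t by (simp add: algebra_simps)
    then have "norm (z - scaleR (1/t) w) \<le> norm z / 2"
      using w(1) t by (simp add: divide_le_eq mult.commute)
    moreover have "norm (R (scaleR (1/t) w)) \<le> C * norm z"
      using w(2) t r False by (simp add: linear_scale[OF lin] t_def C_def field_simps)
    ultimately show ?thesis by blast
  qed
  moreover have "C \<ge> 0" using r by (simp add: C_def)
  ultimately show ?thesis using that by blast
qed

text \<open>Iterating the approximation writes \<open>x\<close> as \<open>\<Sum>k. w k\<close> with \<open>\<parallel>R (w k)\<parallel> \<le> C \<parallel>x\<parallel> / 2\<^sup>k\<close>,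
  and the closed graph identifies \<open>R x\<close> with \<open>\<Sum>k. R (w k)\<close>.\<close>

lemma closed_graph_norm_bound:
  fixes R :: "'a::banach \<Rightarrow> 'b::banach"
  assumes lin: "linear R"
    and closed_graph: "\<And>s x y. s \<longlonglongrightarrow> x \<Longrightarrow> (\<lambda>n. R (s n)) \<longlonglongrightarrow> y \<Longrightarrow> R x = y"
    and step: "\<And>z. norm (z - step z) \<le> norm z / 2" "\<And>z. norm (R (step z)) \<le> C * norm z"
    and "C \<ge> 0"
  shows "norm (R x) \<le> norm x * (2 * C)"
proof -
  define z where "z k = ((\<lambda>v. v - step v) ^^ k) x" for k
  define w where "w k = step (z k)" for k
  have z_Suc: "z (Suc k) = z k - step (z k)" for k
    by (simp add: z_def)
  have z_norm: "norm (z k) \<le> norm x * (1/2) ^ k" for k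
  proof (induct k)
    case 0 then show ?case by (simp add: z_def)
  next
    case (Suc k)
    then show ?case using step(1)[of "z k"] by (simp add: z_Suc)
  qed
  have Rw: "norm (R (w k)) \<le> C * norm x * (1/2) ^ k" for k
    using step(2)[of "z k"] mult_left_mono[OF z_norm[of k] \<open>C \<ge> 0\<close>] by (simp add: w_def ac_simps)
  have partial_sums: "(\<Sum>k<N. w k) = x - z N" for N
    by (induct N) (simp_all add: z_Suc w_def, simp add: z_def)
  have "z \<longlonglongrightarrow> 0"
    by (rule Lim_null_comparison[OF always_eventually[OF allI[OF z_norm]]])
      (intro tendsto_mult_right_zero LIMSEQ_power_zero, simp)
  then have "(\<lambda>N. x - z N) \<longlonglongrightarrow> x - 0" by (intro tendsto_intros)
  then have sums_w: "(\<lambda>N. \<Sum>k<N. w k) \<longlonglongrightarrow> x" by (simp add: partial_sums)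
  have geometric: "summable (\<lambda>k. C * norm x * (1/2) ^ k)"
    by (intro summable_mult summable_geometric) simp
  have summable_Rw: "summable (\<lambda>k. norm (R (w k)))"
    by (rule summable_comparison_test'[OF geometric, where N=0]) (simp add: Rw)
  have "(\<lambda>N. R (\<Sum>k<N. w k)) \<longlonglongrightarrow> (\<Sum>k. R (w k))"
    using summable_LIMSEQ[OF summable_norm_cancel[OF summable_Rw]]
    by (simp add: linear_sum[OF lin])
  with sums_w have "R x = (\<Sum>k. R (w k))" by (rule closed_graph)
  also have "norm \<dots> \<le> (\<Sum>k. norm (R (w k)))" by (rule summable_norm[OF summable_Rw])
  also have "\<dots> \<le> (\<Sum>k. C * norm x * (1/2) ^ k)" by (intro suminf_le summable_Rw geometric Rw)
  also have "\<dots> = C * norm x * 2" by (simp add: suminf_mult suminf_geometric)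
  finally show ?thesis by (simp add: ac_simps)
qed

lemma closed_graph_imp_bounded_linear:
  fixes R :: "'a::banach \<Rightarrow> 'b::banach"
  assumes lin: "linear R"
    and closed_graph: "\<And>s x y. s \<longlonglongrightarrow> x \<Longrightarrow> (\<lambda>n. R (s n)) \<longlonglongrightarrow> y \<Longrightarrow> R x = y"
  shows "bounded_linear R"
proof -
  obtain C where C: "C \<ge> 0" "\<And>z. \<exists>w. norm (z - w) \<le> norm z / 2 \<and> norm (R w) \<le> C * norm z"
    using linear_approximately_bounded[OF lin] by blast
  then obtain step
    where step: "\<And>z. norm (z - step z) \<le> norm z / 2" "\<And>z. norm (R (step z)) \<le> C * norm z"
    by metis
  have "norm (R x) \<le> norm x * (2 * C)" for x
    by (rule closed_graph_norm_bound[OF lin closed_graph step C(1)])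
  then show ?thesis
    using lin by (intro bounded_linear_intro[where K="2 * C"]) (auto simp: linear_add linear_scale)
qed

section \<open>Neumann series\<close>

definition neumann :: "complex \<Rightarrow> ('a::chilbert_space \<Rightarrow> 'a) \<Rightarrow> 'a \<Rightarrow> 'a" where
  "neumann l S x = (\<Sum>n. scaleC (1 / l ^ Suc n) ((S ^^ n) x))"

locale neumann_series =
  fixes S :: "'a::chilbert_space \<Rightarrow> 'a" and c :: real and l :: complex
  assumes bounded_clinear_S: "bounded_clinear S" and c_nonneg: "c \<ge> 0"
    and norm_S: "\<And>x. norm (S x) \<le> c * norm x" and c_less: "c < cmod l"
begin

lemma l_nonzero: "l \<noteq> 0"
  using c_nonneg c_less by auto

definition q :: real where
  "q = c / cmod l"

lemma q: "0 \<le> q" "q < 1"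
  using c_nonneg c_less l_nonzero by (auto simp: q_def divide_less_eq)

lemma norm_term_le: "norm (scaleC (1 / l ^ Suc n) ((S ^^ n) x)) \<le> (norm x / cmod l) * q ^ n"
proof -
  have norm_S_pow: "norm ((S ^^ n) x) \<le> c ^ n * norm x"
    by (induct n) (auto simp: mult.assoc intro: order_trans[OF norm_S] mult_left_mono c_nonneg)
  have "norm (scaleC (1 / l ^ Suc n) ((S ^^ n) x)) = norm ((S ^^ n) x) / cmod l ^ Suc n"
    by (simp add: norm_scaleC norm_divide norm_power norm_mult)
  also have "\<dots> \<le> c ^ n * norm x / cmod l ^ Suc n"
    using l_nonzero by (intro divide_right_mono norm_S_pow) auto
  also have "\<dots> = (norm x / cmod l) * q ^ n"
    using l_nonzero by (simp add: q_def power_divide field_simps)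
  finally show ?thesis .
qed

lemma summable_geometric_bound: "summable (\<lambda>n. (norm x / cmod l) * q ^ n)"
  using q by (intro summable_mult summable_geometric) auto

lemma summable_norm_terms: "summable (\<lambda>n. norm (scaleC (1 / l ^ Suc n) ((S ^^ n) x)))"
proof (rule summable_comparison_test'[OF summable_geometric_bound, where N=0])
  fix n
  show "norm (norm (scaleC (1 / l ^ Suc n) ((S ^^ n) x))) \<le> (norm x / cmod l) * q ^ n"
    using norm_term_le[of n x] by simp
qed

lemma summable_terms: "summable (\<lambda>n. scaleC (1 / l ^ Suc n) ((S ^^ n) x))"
  by (rule summable_norm_cancel[OF summable_norm_terms])

lemma bounded_clinear_S_pow: "bounded_clinear (S ^^ n)"
  by (rule bounded_clinear_funpow[OF bounded_clinear_S])

lemma bounded_clinear_neumann: "bounded_clinear (neumann l S)"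
proof (rule bounded_clinearI[where K="(1 / cmod l) / (1 - q)"])
  fix x y
  show "neumann l S (x + y) = neumann l S x + neumann l S y"
    unfolding neumann_def
    by (simp only: suminf_add[OF summable_terms summable_terms] clinear_add[OF bounded_clinear_S_pow]
        scaleC_add_right)
  fix a
  have "scaleC a (neumann l S x) = (\<Sum>n. scaleC a (scaleC (1 / l ^ Suc n) ((S ^^ n) x)))"
    unfolding neumann_def by (rule bounded_linear.suminf[OF bounded_linear_scaleC_right summable_terms])
  then show "neumann l S (scaleC a x) = scaleC a (neumann l S x)"
    by (simp add: neumann_def clinear_scaleC[OF bounded_clinear_S_pow] scaleC_scaleC mult.commute)
next
  fix x
  have "norm (neumann l S x) \<le> (\<Sum>n. norm (scaleC (1 / l ^ Suc n) ((S ^^ n) x)))"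
    unfolding neumann_def by (rule summable_norm[OF summable_norm_terms])
  also have "\<dots> \<le> (\<Sum>n. (norm x / cmod l) * q ^ n)"
    by (intro suminf_le summable_norm_terms summable_geometric_bound norm_term_le)
  also have "\<dots> = (norm x / cmod l) * (\<Sum>n. q ^ n)"
    using q by (intro suminf_mult summable_geometric) simp
  also have "(\<Sum>n. q ^ n) = 1 / (1 - q)"
    using q by (intro suminf_geometric) simp
  finally show "norm (neumann l S x) \<le> norm x * ((1 / cmod l) / (1 - q))" by simp
qed

lemma neumann_left_inverse: "scaleC l (neumann l S x) - S (neumann l S x) = x"
proof -
  define a where "a n = scaleC (1 / l ^ Suc n) ((S ^^ n) x)" for n
  define b where "b n = scaleC (1 / l ^ n) ((S ^^ n) x)" for n
  have a: "summable a" unfolding a_def by (rule summable_terms)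
  have la: "(\<lambda>n. scaleC l (a n)) = b"
    using l_nonzero by (auto simp: a_def b_def scaleC_scaleC field_simps)
  have "summable b"
    using bounded_linear.summable[OF bounded_linear_scaleC_right a, of l] by (simp add: la)
  have "scaleC l (neumann l S x) = suminf b"
    unfolding neumann_def a_def[symmetric] la[symmetric]
    by (rule bounded_linear.suminf[OF bounded_linear_scaleC_right a])
  also have "\<dots> = (\<Sum>n. b (Suc n)) + b 0"
    using \<open>summable b\<close> by (simp add: suminf_split_head)
  also have "b 0 = x" by (simp add: b_def scaleC_one)
  also have "(\<lambda>n. b (Suc n)) = (\<lambda>n. S (a n))"
    by (auto simp: a_def b_def clinear_scaleC[OF bounded_clinear_S])
  also have "(\<Sum>n. S (a n)) = S (neumann l S x)"
    unfolding neumann_def a_def[symmetric] by (rule clinear_suminf[OF bounded_clinear_S a, symmetric])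
  finally show ?thesis by simp
qed

lemma neumann_intertwining:
  assumes "bounded_clinear Q" and "\<And>x. Q (S x) = S' (Q x)"
  shows "Q (neumann l S x) = neumann l S' (Q x)"
proof -
  have "Q (neumann l S x) = (\<Sum>n. Q (scaleC (1 / l ^ Suc n) ((S ^^ n) x)))"
    unfolding neumann_def by (rule clinear_suminf[OF assms(1) summable_terms])
  also have "\<dots> = neumann l S' (Q x)"
    by (simp add: neumann_def clinear_scaleC[OF assms(1)] funpow_intertwining[of Q S S', OF assms(2)])
  finally show ?thesis .
qed

lemma neumann_right_inverse: "neumann l S (scaleC l x - S x) = x"
  using neumann_left_inverse[of x] neumann_intertwining[OF bounded_clinear_S, of S x]
  by (simp add: clinear_diff[OF bounded_clinear_neumann] clinear_scaleC[OF bounded_clinear_neumann])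

end

lemma cinner_neumann_adjoint:
  assumes "neumann_series S c l" and "neumann_series S' c' (cnj l)"
    and adjoint: "\<And>x y. cinner (S x) y = cinner x (S' y)"
  shows "cinner (neumann l S x) y = cinner x (neumann (cnj l) S' y)"
proof -
  have adjoint_pow: "cinner ((S ^^ n) x) y = cinner x ((S' ^^ n) y)" for n x y
    by (induct n arbitrary: x y) (simp_all add: adjoint funpow_swap1)
  have "cinner (neumann l S x) y = (\<Sum>n. cinner (scaleC (1 / l ^ Suc n) ((S ^^ n) x)) y)"
    unfolding neumann_def
    by (rule bounded_linear.suminf[OF bounded_linear_cinner_left neumann_series.summable_terms[OF assms(1)]])
  also have "\<dots> = (\<Sum>n. cinner x (scaleC (1 / cnj l ^ Suc n) ((S' ^^ n) y)))"
    by (simp add: cinner_scaleC_left cinner_scaleC_right adjoint_pow)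
  also have "\<dots> = cinner x (neumann (cnj l) S' y)"
    unfolding neumann_def
    by (rule bounded_linear.suminf[OF bounded_linear_cinner_right
          neumann_series.summable_terms[OF assms(2)], symmetric])
  finally show ?thesis .
qed

locale semi_hilbert_operator =
  fixes A T :: "'a::chilbert_space \<Rightarrow> 'a"
  assumes positive_A: "positive_op A" and A_nonzero: "A \<noteq> (\<lambda>_. 0)" and T_in_BA: "T \<in> BA A"
begin

abbreviation B where "B \<equiv> sqrt_op A"
abbreviation V where "V \<equiv> closure (range B)"
abbreviation P where "P \<equiv> proj V"

lemma B_B: "B (B x) = A x"
  by (rule sqrt_op(2)[OF positive_A])

lemma bounded_clinear_B: "bounded_clinear B"
  using sqrt_op(1)[OF positive_A] by (rule positive_op_bounded_clinear)

lemma B_selfadjoint: "cinner (B x) y = cinner x (B y)"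
  using sqrt_op(1)[OF positive_A] by (rule positive_op_selfadjoint)

lemma bounded_clinear_A: "bounded_clinear A"
  using positive_A by (rule positive_op_bounded_clinear)

lemma bounded_clinear_T: "bounded_clinear T"
  using T_in_BA by (simp add: BA_def)

lemma bounded_clinear_adj_T: "bounded_clinear (adj T)"
  by (rule bounded_clinear_adj[OF bounded_clinear_T])

lemma cinner_adj_T: "cinner (T x) y = cinner x (adj T y)"
  by (rule cinner_adj_right[OF bounded_clinear_T])

lemma adj_T_B_in_range: "adj T (B x) \<in> range B"
proof -
  have "(adj T \<circ> B) x \<in> range (adj T \<circ> B)" by (rule rangeI)
  then show ?thesis using T_in_BA by (auto simp: BA_def)
qed

lemma closed_csubspace_V: "closed_csubspace V"
  by (rule closed_csubspace_closure_range[OF bounded_clinear_B])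

lemma csubspace_V: "csubspace V"
  using closed_csubspace_V by (simp add: closed_csubspace_def)

lemma B_in_V: "B x \<in> V"
  using closure_subset[of "range B"] by (simp add: subset_iff)

lemma orthogonal_V_if_B_eq_0:
  assumes "B u = 0" and "v \<in> V"
  shows "cinner u v = 0"
proof -
  obtain f where f: "\<And>n. f n \<in> range B" "f \<longlonglongrightarrow> v" using assms(2) by (meson closure_sequential)
  have "cinner u (f n) = 0" for n
  proof -
    obtain w where "f n = B w" using f(1)[of n] by blast
    then show ?thesis using B_selfadjoint[of u w] assms(1) by simp
  qed
  moreover have "(\<lambda>n. cinner u (f n)) \<longlonglongrightarrow> cinner u v"
    by (rule bounded_linear.tendsto[OF bounded_linear_cinner_right f(2)])
  ultimately have "(\<lambda>n. 0) \<longlonglongrightarrow> cinner u v" by simp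
  then show ?thesis using LIMSEQ_unique[OF tendsto_const] by metis
qed

lemma B_eq_0_if_orthogonal_V:
  assumes "\<And>v. v \<in> V \<Longrightarrow> cinner u v = 0"
  shows "B u = 0"
proof -
  have "cinner (B u) (B u) = cinner u (B (B u))" by (rule B_selfadjoint)
  also have "\<dots> = 0" using assms B_in_V by blast
  finally show ?thesis by simp
qed

lemma proj_V_in: "P y \<in> V"
  by (rule closed_csubspace.proj_in[OF closed_csubspace_V])

lemma B_proj_V: "B (P y) = B y"
proof -
  have "B (y - P y) = 0"
    by (rule B_eq_0_if_orthogonal_V) (rule closed_csubspace.proj_orthogonal[OF closed_csubspace_V])
  then show ?thesis by (simp add: clinear_diff[OF bounded_clinear_B])
qed

lemma A_proj_V: "A (P y) = A y"
  using B_B[of "P y"] B_B[of y] B_proj_V[of y] by simp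

lemma proj_V_eq_0: "B u = 0 \<Longrightarrow> P u = 0"
  by (rule closed_csubspace.proj_eq_0[OF closed_csubspace_V]) (rule orthogonal_V_if_B_eq_0)

lemma proj_V_id: "v \<in> V \<Longrightarrow> P v = v"
  by (rule closed_csubspace.proj_id[OF closed_csubspace_V])

lemma bounded_clinear_proj_V: "bounded_clinear P"
  by (rule closed_csubspace.bounded_clinear_proj[OF closed_csubspace_V])

lemma proj_V_selfadjoint: "cinner (P x) y = cinner x (P y)"
  by (rule closed_csubspace.proj_selfadjoint[OF closed_csubspace_V])

lemma B_inj_on_V: "inj_on B V"
proof (rule inj_onI)
  fix v w assume "v \<in> V" "w \<in> V" "B v = B w"
  then have "B (v - w) = 0" "v - w \<in> V"
    by (simp_all add: clinear_diff[OF bounded_clinear_B] csubspace_diff[OF csubspace_V])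
  then have "cinner (v - w) (v - w) = 0" by (rule orthogonal_V_if_B_eq_0)
  then show "v = w" by simp
qed

definition T_diamond :: "'a \<Rightarrow> 'a" where
  "T_diamond x = (THE v. v \<in> V \<and> B v = adj T (B x))"

lemma T_diamond: "T_diamond x \<in> V" "B (T_diamond x) = adj T (B x)"
proof -
  obtain w where "adj T (B x) = B w" using adj_T_B_in_range by blast
  then have "P w \<in> V \<and> B (P w) = adj T (B x)" by (simp add: proj_V_in B_proj_V)
  moreover have "v = v'" if "v \<in> V \<and> B v = adj T (B x)" "v' \<in> V \<and> B v' = adj T (B x)" for v v'
    using that inj_onD[OF B_inj_on_V, of v v'] by simp
  ultimately have "\<exists>!v. v \<in> V \<and> B v = adj T (B x)" by blast
  then have "T_diamond x \<in> V \<and> B (T_diamond x) = adj T (B x)"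
    unfolding T_diamond_def by (rule theI')
  then show "T_diamond x \<in> V" "B (T_diamond x) = adj T (B x)" by simp_all
qed

lemma T_diamond_eqI: "v \<in> V \<Longrightarrow> B v = adj T (B x) \<Longrightarrow> T_diamond x = v"
  using T_diamond inj_onD[OF B_inj_on_V, of "T_diamond x" v] by simp

lemma linear_T_diamond: "linear T_diamond"
  and T_diamond_scaleC: "T_diamond (scaleC c x) = scaleC c (T_diamond x)"
proof -
  show "T_diamond (scaleC c x) = scaleC c (T_diamond x)" for c x
    using T_diamond by (intro T_diamond_eqI) (simp_all add: csubspace_scaleC[OF csubspace_V]
        clinear_scaleC[OF bounded_clinear_B] clinear_scaleC[OF bounded_clinear_adj_T])
  moreover have "T_diamond (x + y) = T_diamond x + T_diamond y" for x y
    using T_diamond by (intro T_diamond_eqI) (simp_all add: csubspace_add[OF csubspace_V]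
        clinear_add[OF bounded_clinear_B] clinear_add[OF bounded_clinear_adj_T])
  ultimately show "linear T_diamond"
    by (intro linearI) (simp_all add: scaleR_scaleC)
qed

lemma bounded_clinear_T_diamond: "bounded_clinear T_diamond"
proof -
  have "bounded_linear T_diamond"
  proof (rule closed_graph_imp_bounded_linear[OF linear_T_diamond])
    fix s x y assume s: "s \<longlonglongrightarrow> x" and Ts: "(\<lambda>n. T_diamond (s n)) \<longlonglongrightarrow> y"
    have "y \<in> V"
      using closed_closure T_diamond(1) Ts by (rule closed_sequentially)
    moreover have "(\<lambda>n. B (T_diamond (s n))) \<longlonglongrightarrow> B y"
      by (rule bounded_clinear_tendsto[OF bounded_clinear_B Ts])
    moreover have "(\<lambda>n. B (T_diamond (s n))) \<longlonglongrightarrow> adj T (B x)"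
      unfolding T_diamond(2)
      by (intro bounded_clinear_tendsto[OF bounded_clinear_adj_T]
          bounded_clinear_tendsto[OF bounded_clinear_B s])
    ultimately have "B y = adj T (B x)" using LIMSEQ_unique by blast
    with \<open>y \<in> V\<close> show "T_diamond x = y" by (rule T_diamond_eqI)
  qed
  then show ?thesis by (simp add: bounded_clinear_def T_diamond_scaleC)
qed

lemma diamond_eq_T_diamond: "diamond A T = T_diamond"
  unfolding diamond_def
proof (rule the_equality)
  show "bounded_clinear T_diamond \<and> adj T \<circ> B = B \<circ> T_diamond \<and> range T_diamond \<subseteq> V"
    using bounded_clinear_T_diamond T_diamond by auto
  fix R assume R: "bounded_clinear R \<and> adj T \<circ> B = B \<circ> R \<and> range R \<subseteq> V"
  show "R = T_diamond"
  proof
    fix x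
    have "R x \<in> V" "B (R x) = adj T (B x)" using R by (auto dest: fun_cong[of _ _ x])
    then show "R x = T_diamond x" by (simp add: T_diamond_eqI)
  qed
qed

abbreviation D where "D \<equiv> diamond A T"

lemma bounded_clinear_D: "bounded_clinear D"
  using bounded_clinear_T_diamond by (simp add: diamond_eq_T_diamond)

lemma D_in_V: "D x \<in> V"
  using T_diamond by (simp add: diamond_eq_T_diamond)

lemma B_D: "B (D x) = adj T (B x)"
  using T_diamond by (simp add: diamond_eq_T_diamond)

lemma B_T: "B (T x) = adj D (B x)"
proof (rule cinner_eq_left_imp_eq)
  fix z
  have "cinner (B (T x)) z = cinner x (adj T (B z))" by (simp add: B_selfadjoint cinner_adj_T)
  also have "\<dots> = cinner (B x) (D z)" by (simp add: B_D B_selfadjoint)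
  also have "\<dots> = cinner (adj D (B x)) z" by (simp add: cinner_adj_left[OF bounded_clinear_D])
  finally show "cinner (B (T x)) z = cinner (adj D (B x)) z" .
qed

lemma normA_eq: "normA A x = norm (B x)"
proof -
  have "cinner (A x) x = cinner (B x) (B x)" using B_selfadjoint[of "B x" x] B_B[of x] by simp
  then show ?thesis by (simp add: normA_def Re_cinner_self)
qed

abbreviation VA where "VA \<equiv> closure (range A)"

lemma closed_csubspace_VA: "closed_csubspace VA"
  by (rule closed_csubspace_closure_range[OF bounded_clinear_A])

lemma A_in_VA: "A x \<in> VA"
  using closure_subset[of "range A"] by (simp add: subset_iff)

lemma B_proj_VA: "B (proj VA w) = B w"
proof -
  define u where "u = w - proj VA w"
  have "cinner (A u) z = 0" for z
    using closed_csubspace.proj_orthogonal[OF closed_csubspace_VA A_in_VA, of w]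
    by (simp add: u_def positive_op_selfadjoint[OF positive_A])
  then have "A u = 0" using cinner_self_eq_0 by blast
  then have "cinner (B u) (B u) = 0" by (simp add: B_selfadjoint B_B)
  then show ?thesis by (simp add: u_def clinear_diff[OF bounded_clinear_B])
qed

lemma normalize_in_VA:
  assumes "B u \<noteq> 0"
  shows "proj VA (scaleC (of_real (1 / norm (B u))) u) \<in> VA"
    and "norm (B (proj VA (scaleC (of_real (1 / norm (B u))) u))) = 1"
  using assms closed_csubspace.proj_in[OF closed_csubspace_VA]
  by (simp_all add: B_proj_VA clinear_scaleC[OF bounded_clinear_B] norm_scaleC norm_divide)

lemma exists_unit_in_VA: "\<exists>x. x \<in> VA \<and> norm (B x) = 1"
proof -
  obtain z where "A z \<noteq> 0" using A_nonzero by auto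
  then have "B z \<noteq> 0" using B_B[of z] clinear_zero[OF bounded_clinear_B] by auto
  then show ?thesis using normalize_in_VA by blast
qed

lemma opnormA_upper:
  assumes "bounded_clinear Q" and intertwining: "\<And>w. B (S w) = Q (B w)"
    and "x \<in> VA" "norm (B x) = 1"
  shows "norm (B (S x)) \<le> opnormA A S"
proof -
  obtain K where K: "\<forall>x. norm (Q x) \<le> norm x * K"
    using bounded_clinear_pos_bounded[OF assms(1)] by blast
  have "norm (Q (B x)) \<le> K" if "norm (B x) = 1" for x
    using K that by (metis mult_1)
  then have "bdd_above {normA A (S x) | x. x \<in> VA \<and> normA A x = 1}"
    by (intro bdd_aboveI[of _ K]) (auto simp: normA_eq intertwining)
  then show ?thesis
    unfolding opnormA_def using assms(3,4) by (intro cSup_upper) (auto simp: normA_eq)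
qed

lemma opnormA_bound:
  assumes S: "bounded_clinear S" and Q: "bounded_clinear Q" and intertwining: "\<And>w. B (S w) = Q (B w)"
  shows "0 \<le> opnormA A S" and "norm (B (S w)) \<le> opnormA A S * norm (B w)"
proof -
  obtain x where "x \<in> VA" "norm (B x) = 1" using exists_unit_in_VA by blast
  then show "0 \<le> opnormA A S"
    using opnormA_upper[OF Q intertwining] norm_ge_zero order_trans by blast
  show "norm (B (S w)) \<le> opnormA A S * norm (B w)"
  proof (cases "B w = 0")
    case True
    then show ?thesis using intertwining[of w] by (simp add: clinear_zero[OF Q])
  next
    case False
    define u where "u = proj VA (scaleC (of_real (1 / norm (B w))) w)"
    have "norm (B (S u)) \<le> opnormA A S"
      using normalize_in_VA[OF False] by (intro opnormA_upper[OF Q intertwining]) (simp_all add: u_def)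
    also have "B (S u) = scaleC (of_real (1 / norm (B w))) (B (S w))"
      by (simp add: u_def intertwining B_proj_VA clinear_scaleC[OF Q] clinear_scaleC[OF bounded_clinear_B])
    finally show ?thesis using False by (simp add: norm_scaleC norm_divide field_simps)
  qed
qed

abbreviation normA_T where "normA_T \<equiv> opnormA A T"
abbreviation normA_D where "normA_D \<equiv> opnormA A D"

lemma normA_T: "0 \<le> normA_T" "norm (B (T w)) \<le> normA_T * norm (B w)"
  by (rule opnormA_bound[OF bounded_clinear_T bounded_clinear_adj[OF bounded_clinear_D] B_T])+

lemma normA_D: "0 \<le> normA_D" "norm (B (D w)) \<le> normA_D * norm (B w)"
  by (rule opnormA_bound[OF bounded_clinear_D bounded_clinear_adj_T B_D])+

lemma norm_le_if_cinner_B_le: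
  assumes v: "v \<in> V" and K: "K \<ge> 0" and h: "\<And>w. cmod (cinner v (B w)) \<le> K * norm (B w)"
  shows "norm v \<le> K"
proof -
  obtain f where f: "\<And>n. f n \<in> range B" "f \<longlonglongrightarrow> v" using v by (meson closure_sequential)
  have "(\<lambda>n. cmod (cinner v (f n))) \<longlonglongrightarrow> cmod (cinner v v)"
    by (intro tendsto_norm bounded_linear.tendsto[OF bounded_linear_cinner_right f(2)])
  moreover have "(\<lambda>n. K * norm (f n)) \<longlonglongrightarrow> K * norm v"
    by (intro tendsto_mult tendsto_const tendsto_norm f(2))
  moreover have "cmod (cinner v (f n)) \<le> K * norm (f n)" for n
    using f(1)[of n] h by auto
  ultimately have "cmod (cinner v v) \<le> K * norm v"
    by (intro LIMSEQ_le) auto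
  then have "norm v * norm v \<le> K * norm v"
    by (simp add: cinner_self power2_eq_square norm_mult del: of_real_power)
  then show ?thesis using K by (cases "v = 0") simp_all
qed

lemma norm_D_le: "norm (D x) \<le> normA_T * norm x"
proof (rule norm_le_if_cinner_B_le[OF D_in_V])
  show "0 \<le> normA_T * norm x" using normA_T by simp
  fix w
  have "cmod (cinner (D x) (B w)) = cmod (cinner x (B (T w)))"
    by (simp add: cinner_adj_right[OF bounded_clinear_D] B_T)
  also have "\<dots> \<le> norm x * norm (B (T w))" by (rule cinner_Cauchy_Schwarz)
  also have "\<dots> \<le> norm x * (normA_T * norm (B w))" by (intro mult_left_mono normA_T) simp
  finally show "cmod (cinner (D x) (B w)) \<le> normA_T * norm x * norm (B w)" by (simp add: ac_simps)
qed

lemma norm_proj_V_T_le: "norm (P (T x)) \<le> normA_D * norm x"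
proof (rule norm_le_if_cinner_B_le[OF proj_V_in])
  show "0 \<le> normA_D * norm x" using normA_D by simp
  fix w
  have "cmod (cinner (P (T x)) (B w)) = cmod (cinner x (B (D w)))"
    by (simp add: proj_V_selfadjoint proj_V_id B_in_V cinner_adj_T B_D)
  also have "\<dots> \<le> norm x * norm (B (D w))" by (rule cinner_Cauchy_Schwarz)
  also have "\<dots> \<le> norm x * (normA_D * norm (B w))" by (intro mult_left_mono normA_D) simp
  finally show "cmod (cinner (P (T x)) (B w)) \<le> normA_D * norm x * norm (B w)" by (simp add: ac_simps)
qed

lemma norm_adj_T_proj_V_le: "norm (adj T (P y)) \<le> normA_D * norm y"
  by (rule norm_adjoint_le[of "\<lambda>x. P (T x)"])
    (simp_all add: proj_V_selfadjoint cinner_adj_T norm_proj_V_T_le normA_D)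

end

locale large_parameter = semi_hilbert_operator +
  fixes l :: complex
  assumes l_large: "cmod l > max normA_T normA_D"
begin

definition S :: "'a \<Rightarrow> 'a" where
  "S x = P (T x)"

definition L :: "'a \<Rightarrow> 'a" where
  "L x = scaleC l x - T x"

definition N :: "'a \<Rightarrow> 'a" where
  "N = neumann l S"

lemma bounded_clinear_S: "bounded_clinear S"
  unfolding S_def by (rule bounded_clinear_compose[OF bounded_clinear_proj_V bounded_clinear_T])

lemma neumann_series_S: "neumann_series S normA_D l"
  by unfold_locales (use bounded_clinear_S normA_D norm_proj_V_T_le l_large in \<open>auto simp: S_def\<close>)

lemma bounded_clinear_N: "bounded_clinear N"
  unfolding N_def by (rule neumann_series.bounded_clinear_neumann[OF neumann_series_S])

lemma bounded_clinear_L: "bounded_clinear L"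
  unfolding L_def[abs_def]
  by (intro bounded_clinear_diff bounded_clinear_scaleC bounded_clinear_ident bounded_clinear_T)

lemma A_T_eq_A_S: "A (T y) = A (S y)"
  by (simp add: S_def A_proj_V)

lemma N_right_inverse: "N (scaleC l x - S x) = x"
  unfolding N_def by (rule neumann_series.neumann_right_inverse[OF neumann_series_S])

lemma A_L_N: "A (L (N x)) = A x"
proof -
  have "A (L (N x)) = A (scaleC l (N x) - S (N x))"
    by (simp add: L_def clinear_diff[OF bounded_clinear_A] A_T_eq_A_S)
  also have "scaleC l (N x) - S (N x) = x"
    unfolding N_def by (rule neumann_series.neumann_left_inverse[OF neumann_series_S])
  finally show ?thesis .
qed

lemma A_N_L: "A (N (L x)) = A x"
proof -
  define z where "z = T x - S x"
  have "B z = 0" by (simp add: z_def S_def B_proj_V clinear_diff[OF bounded_clinear_B])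
  then have "S z = 0"
    by (simp add: S_def B_T clinear_zero[OF bounded_clinear_adj[OF bounded_clinear_D]] proj_V_eq_0)
  then have "scaleC l (N z) = z"
    using N_right_inverse[of z] by (simp add: clinear_scaleC[OF bounded_clinear_N])
  then have "N z = scaleC (1 / l) z"
    using neumann_series.l_nonzero[OF neumann_series_S] scaleC_scaleC[of "1 / l" l "N z"]
    by (simp add: scaleC_one)
  then have "A (N z) = 0"
    by (simp add: B_B[symmetric] \<open>B z = 0\<close> clinear_scaleC[OF bounded_clinear_B]
        clinear_zero[OF bounded_clinear_B])
  moreover have "N (L x) = N (scaleC l x - S x) - N z"
    by (simp add: L_def z_def clinear_diff[OF bounded_clinear_N, symmetric])
  ultimately show ?thesis
    using N_right_inverse[of x] by (simp add: clinear_diff[OF bounded_clinear_A])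
qed

lemma L_in_BA: "L \<in> BA A"
proof -
  have "adj L = (\<lambda>y. scaleC (cnj l) y - adj T y)"
    by (rule adj_unique) (simp add: L_def cinner_diff_left cinner_diff_right cinner_scaleC_left
        cinner_scaleC_right cinner_adj_T)
  then have "adj L (B x) = B (scaleC (cnj l) x - D x)" for x
    by (simp add: clinear_diff[OF bounded_clinear_B] clinear_scaleC[OF bounded_clinear_B] B_D)
  then show ?thesis using bounded_clinear_L by (auto simp: BA_def)
qed

lemma N_in_BA: "N \<in> BA A"
proof -
  have "neumann_series (\<lambda>y. adj T (P y)) normA_D (cnj l)"
    using bounded_clinear_compose[OF bounded_clinear_adj_T bounded_clinear_proj_V]
      normA_D norm_adj_T_proj_V_le l_large
    by unfold_locales auto
  moreover have "cinner (S x) y = cinner x (adj T (P y))" for x y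
    by (simp add: S_def proj_V_selfadjoint cinner_adj_T)
  ultimately have "adj N = neumann (cnj l) (\<lambda>y. adj T (P y))"
    unfolding N_def by (intro adj_unique cinner_neumann_adjoint[OF neumann_series_S])
  moreover have "neumann_series D normA_T (cnj l)"
    by unfold_locales (use bounded_clinear_D normA_T norm_D_le l_large in auto)
  then have "B (neumann (cnj l) D x) = neumann (cnj l) (\<lambda>y. adj T (P y)) (B x)" for x
    by (rule neumann_series.neumann_intertwining[OF _ bounded_clinear_B])
      (simp add: proj_V_id B_in_V B_D)
  ultimately have "adj N (B x) = B (neumann (cnj l) D x)" for x by simp
  then show ?thesis using bounded_clinear_N by (auto simp: BA_def)
qed

lemma N_nonzero: "N \<noteq> (\<lambda>_. 0)"
proof
  assume "N = (\<lambda>_. 0)"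
  then have "A x = 0" for x
    using A_L_N[of x] by (simp add: clinear_zero[OF bounded_clinear_L] clinear_zero[OF bounded_clinear_A])
  then show False using A_nonzero by auto
qed

lemma A_invertible_resolvent: "A_invertible A (\<lambda>x. scaleC l x - T x)"
  unfolding A_invertible_def L_def[symmetric, abs_def]
  using L_in_BA N_in_BA N_nonzero A_L_N A_N_L by (auto simp: o_def)

end

theorem mainTheorem10:
  fixes A T :: "'a::chilbert_space \<Rightarrow> 'a"
  assumes "positive_op A"
    and "A \<noteq> (\<lambda>_. 0)"
    and "T \<in> BA A"
  shows "(\<forall>l\<in>spectrumA A T. cmod l \<le> max (opnormA A T) (opnormA A (diamond A T)))
         \<and> bounded (spectrumA A T)"
proof -
  interpret semi_hilbert_operator A T
    using assms by unfold_locales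
  have bound: "cmod l \<le> max (opnormA A T) (opnormA A (diamond A T))" if "l \<in> spectrumA A T" for l
  proof (rule ccontr)
    assume "\<not> ?thesis"
    then interpret large_parameter A T l
      by unfold_locales (simp add: not_le)
    show False using that A_invertible_resolvent by (simp add: spectrumA_def)
  qed
  then have "spectrumA A T \<subseteq> cball 0 (max (opnormA A T) (opnormA A (diamond A T)))"
    by (auto simp: dist_norm)
  then show ?thesis using bound bounded_subset[OF bounded_cball] by blast
qed

end
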